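(* Let $A,B\in\mathbb M(n)$, $1\le k\le n$, let $A=U|A|$ be a polar decomposition of $A$, and suppose $s_k(A)>0$. Then $A$ is norm-parallel to $B$ in $\|\cdot\|_{(k)}$ (i.e. $\|A+\lambda B\|_{(k)}=\|A\|_{(k)}+\|B\|_{(k)}$ for some $\lambda\in\mathbb C$ with $|\lambda|=1$) if and only if there exist $k$ orthonormal vectors $u_1,\dots,u_k\in\mathbb C^n$ such that $|A|u_i=s_i(A)u_i$ for all $1\le i\le k$ and $\big|\sum_{i=1}^k\langle u_i,U^*Bu_i\rangle\big|=\|B\|_{(k)}$.
   Context: $U$ is unitary, $|A|=(A^*A)^{1/2}$, $s_1(A)\ge\dots\ge s_n(A)$ are the singular values, and $\|X\|_{(k)}$ is the sum of the $k$ largest singular values of $X$. Inner products are conjugate linear in the first argument and linear in the second. *)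

theory Defs
  imports "Jordan_Normal_Form.Jordan_Normal_Form" "Jordan_Normal_Form.Schur_Decomposition" "HOL-Library.Multiset"
begin

(* Inner product on C^n, conjugate-linear in the FIRST argument: <x,y> = sum conj(x_i) y_i *)
definition cinner :: "complex vec \<Rightarrow> complex vec \<Rightarrow> complex" where
  "cinner x y = conjugate x \<bullet> y"

abbreviation adj :: "complex mat \<Rightarrow> complex mat" where
  "adj A \<equiv> mat_adjoint A"

definition unitary_mat :: "nat \<Rightarrow> complex mat \<Rightarrow> bool" where
  "unitary_mat n U \<longleftrightarrow> U \<in> carrier_mat n n \<and> adj U * U = 1\<^sub>m n \<and> U * adj U = 1\<^sub>m n"

definition psd_mat :: "nat \<Rightarrow> complex mat \<Rightarrow> bool" where
  "psd_mat n P \<longleftrightarrow> P \<in> carrier_mat n n \<and> adj P = P \<and>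
     (\<forall>x \<in> carrier_vec n. Im (cinner x (P *\<^sub>v x)) = 0 \<and> Re (cinner x (P *\<^sub>v x)) \<ge> 0)"

definition mat_abs :: "complex mat \<Rightarrow> complex mat" where
  "mat_abs A = (THE P. psd_mat (dim_col A) P \<and> P * P = adj A * A)"

definition singular_values :: "complex mat \<Rightarrow> real list" where
  "singular_values A = rev (sorted_list_of_multiset (image_mset Re (proots (char_poly (mat_abs A)))))"

(* s_i(A), 1-based index: s_1(A) \<ge> s_2(A) \<ge> ... \<ge> s_n(A) *)
definition sing_val :: "complex mat \<Rightarrow> nat \<Rightarrow> real" where
  "sing_val A i = singular_values A ! (i - 1)"

definition ky_fan_norm :: "nat \<Rightarrow> complex mat \<Rightarrow> real" where
  "ky_fan_norm k X = (\<Sum>i = 1..k. sing_val X i)"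

end

theory Submission
  imports Defs
begin

text \<open>
  The Ky Fan norm is a maximum: \<open>\<parallel>X\<parallel>\<^sub>(\<^sub>k\<^sub>) = max |\<Sum>\<^sub>i\<^sub><\<^sub>k \<langle>y i, X x i\<rangle>|\<close> over pairs of
  orthonormal \<open>k\<close>-families, attained by singular vectors; the bound comes from a singular value
  decomposition and a rearrangement inequality. Hence \<open>\<parallel>A + c B\<parallel>\<^sub>(\<^sub>k\<^sub>) \<le> \<parallel>A\<parallel>\<^sub>(\<^sub>k\<^sub>) + \<parallel>B\<parallel>\<^sub>(\<^sub>k\<^sub>)\<close>,
  and \<open>u\<close> as in the statement gives equality for the unimodular \<open>c\<close> that rotates
  \<open>\<Sum>\<^sub>i \<langle>u i, U\<^sup>* B u i\<rangle>\<close> onto the positive axis.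

  Conversely, families \<open>x, y\<close> attaining \<open>\<parallel>A + c B\<parallel>\<^sub>(\<^sub>k\<^sub>)\<close> must attain \<open>\<parallel>A\<parallel>\<^sub>(\<^sub>k\<^sub>)\<close> and
  \<open>\<parallel>B\<parallel>\<^sub>(\<^sub>k\<^sub>)\<close> at once. Writing \<open>A = U |A|\<close>, the family \<open>U\<^sup>* y\<close> then attains the maximum
  of \<open>\<Sum>\<^sub>i \<langle>U\<^sup>* y i, |A| x i\<rangle>\<close>, and since \<open>s\<^sub>k(A) > 0\<close> this forces \<open>U\<^sup>* y = x\<close> and makes
  \<open>span x\<close> an invariant subspace of \<open>|A|\<close> on which \<open>|A|\<close> has the eigenvalues
  \<open>s\<^sub>1(A), \<dots>, s\<^sub>k(A)\<close>. An eigenbasis \<open>u\<close> of that subspace has the same value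
  \<open>\<Sum>\<^sub>i \<langle>u i, U\<^sup>* B u i\<rangle>\<close> as \<open>x\<close>, because that sum is a trace.
\<close>

section \<open>Inner products and orthonormal families\<close>

definition orthonormal :: "nat \<Rightarrow> nat \<Rightarrow> (nat \<Rightarrow> complex vec) \<Rightarrow> bool" where
  "orthonormal n m e \<longleftrightarrow> (\<forall>i<m. e i \<in> carrier_vec n) \<and>
     (\<forall>i<m. \<forall>j<m. cinner (e i) (e j) = (if i = j then 1 else 0))"

definition lin_comb :: "nat \<Rightarrow> nat \<Rightarrow> (nat \<Rightarrow> complex) \<Rightarrow> (nat \<Rightarrow> complex vec) \<Rightarrow> complex vec" where
  "lin_comb n m c e = vec n (\<lambda>a. \<Sum>j<m. c j * e j $ a)"

definition hermitian :: "nat \<Rightarrow> complex mat \<Rightarrow> bool" where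
  "hermitian n H \<longleftrightarrow> H \<in> carrier_mat n n \<and>
     (\<forall>x\<in>carrier_vec n. \<forall>y\<in>carrier_vec n. cinner x (H *\<^sub>v y) = cinner (H *\<^sub>v x) y)"

lemma cinner_eq_sum: "x \<in> carrier_vec n \<Longrightarrow> y \<in> carrier_vec n \<Longrightarrow>
   cinner x y = (\<Sum>i<n. cnj (x$i) * y$i)"
  unfolding cinner_def scalar_prod_def by (auto intro!: sum.cong simp: lessThan_atLeast0)

lemma cinner_commute: "x \<in> carrier_vec n \<Longrightarrow> y \<in> carrier_vec n \<Longrightarrow> cinner y x = cnj (cinner x y)"
  by (simp add: cinner_eq_sum[of _ n] mult.commute)

lemma cinner_add_right: "x \<in> carrier_vec n \<Longrightarrow> y \<in> carrier_vec n \<Longrightarrow> z \<in> carrier_vec n \<Longrightarrow>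
   cinner x (y + z) = cinner x y + cinner x z"
  by (simp add: cinner_eq_sum[of _ n] distrib_left sum.distrib)

lemma cinner_add_left: "x \<in> carrier_vec n \<Longrightarrow> y \<in> carrier_vec n \<Longrightarrow> z \<in> carrier_vec n \<Longrightarrow>
   cinner (y + z) x = cinner y x + cinner z x"
  by (simp add: cinner_eq_sum[of _ n] distrib_right sum.distrib)

lemma cinner_minus_right: "x \<in> carrier_vec n \<Longrightarrow> y \<in> carrier_vec n \<Longrightarrow> z \<in> carrier_vec n \<Longrightarrow>
   cinner x (y - z) = cinner x y - cinner x z"
  by (simp add: cinner_eq_sum[of _ n] right_diff_distrib sum_subtractf)

lemma cinner_minus_left: "x \<in> carrier_vec n \<Longrightarrow> y \<in> carrier_vec n \<Longrightarrow> z \<in> carrier_vec n \<Longrightarrow>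
   cinner (y - z) x = cinner y x - cinner z x"
  by (simp add: cinner_eq_sum[of _ n] left_diff_distrib sum_subtractf)

lemma cinner_smult_right: "x \<in> carrier_vec n \<Longrightarrow> y \<in> carrier_vec n \<Longrightarrow>
   cinner x (a \<cdot>\<^sub>v y) = a * cinner x y"
  by (simp add: cinner_eq_sum[of _ n] sum_distrib_left algebra_simps)

lemma cinner_smult_left: "x \<in> carrier_vec n \<Longrightarrow> y \<in> carrier_vec n \<Longrightarrow>
   cinner (a \<cdot>\<^sub>v x) y = cnj a * cinner x y"
  by (simp add: cinner_eq_sum[of _ n] sum_distrib_left algebra_simps)

lemma cinner_zero_right [simp]: "x \<in> carrier_vec n \<Longrightarrow> cinner x (0\<^sub>v n) = 0"
  by (simp add: cinner_eq_sum[of _ n])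

lemma cnj_mult_self: "cnj z * z = complex_of_real ((cmod z)\<^sup>2)"
  using complex_norm_square[of z] by (simp add: mult.commute)

lemma cinner_self: "x \<in> carrier_vec n \<Longrightarrow> cinner x x = of_real (\<Sum>i<n. (cmod (x$i))\<^sup>2)"
  by (simp only: cinner_eq_sum[of _ n] cnj_mult_self of_real_sum)

lemma cinner_self_real: "x \<in> carrier_vec n \<Longrightarrow> cinner x x = of_real (Re (cinner x x))"
  by (simp add: cinner_self[of _ n])

lemma Re_cinner_self_nonneg: "x \<in> carrier_vec n \<Longrightarrow> Re (cinner x x) \<ge> 0"
  by (simp add: cinner_self[of _ n] sum_nonneg)

lemma cinner_self_eq_zero: assumes "x \<in> carrier_vec n" "cinner x x = 0" shows "x = 0\<^sub>v n"
proof -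
  have "complex_of_real (\<Sum>i<n. (cmod (x$i))\<^sup>2) = 0" using assms cinner_self[of x n] by metis
  hence "(\<Sum>i<n. (cmod (x$i))\<^sup>2) = 0" by (simp only: of_real_eq_0_iff)
  hence "\<forall>i\<in>{..<n}. (cmod (x$i))\<^sup>2 = 0" by (subst sum_nonneg_eq_0_iff[symmetric]) auto
  thus ?thesis using assms(1) by (auto intro!: eq_vecI)
qed

lemma cmod_cinner_commute: "x \<in> carrier_vec n \<Longrightarrow> y \<in> carrier_vec n \<Longrightarrow>
   cmod (cinner x y) = cmod (cinner y x)"
  using cinner_commute[of x n y] by simp

lemma vec_eq_if_minus_eq_zero: assumes "(x :: complex vec) \<in> carrier_vec n" "y \<in> carrier_vec n"
  and "x - y = 0\<^sub>v n"
  shows "x = y"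
proof (rule eq_vecI)
  fix i assume i: "i < dim_vec y"
  have "x $ i - y $ i = (x - y) $ i" using i by (rule index_minus_vec(1)[symmetric])
  thus "x $ i = y $ i" using i assms by simp
qed (use assms in simp)

lemma cinner_unit_vec: assumes x: "x \<in> carrier_vec n" and a: "a < n"
  shows "cinner x (unit_vec n a) = cnj (x $ a)"
proof -
  have "cinner x (unit_vec n a) = (\<Sum>i<n. cnj (x $ i) * unit_vec n a $ i)"
    by (rule cinner_eq_sum[OF x]) simp
  also have "\<dots> = (\<Sum>i<n. if i = a then cnj (x $ a) else 0)" using a by (intro sum.cong) auto
  finally show ?thesis using a by simp
qed

lemma mult_mat_vec_assoc3: assumes "A \<in> carrier_mat n n" "B \<in> carrier_mat n n" "C \<in> carrier_mat n n"
  and "x \<in> carrier_vec n"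
  shows "(A * B * C) *\<^sub>v x = A *\<^sub>v (B *\<^sub>v (C *\<^sub>v x))"
proof -
  have "(A * B * C) *\<^sub>v x = (A * B) *\<^sub>v (C *\<^sub>v x)" by (rule assoc_mult_mat_vec) (use assms in auto)
  also have "\<dots> = A *\<^sub>v (B *\<^sub>v (C *\<^sub>v x))" by (rule assoc_mult_mat_vec) (use assms in auto)
  finally show ?thesis .
qed

lemma index_mat_adjoint: "A \<in> carrier_mat n m \<Longrightarrow> i < m \<Longrightarrow> j < n \<Longrightarrow> adj A $$ (i,j) = cnj (A $$ (j,i))"
  unfolding mat_adjoint_def by (simp add: mat_of_rows_index)

lemma mat_adjoint_carrier: "A \<in> carrier_mat n m \<Longrightarrow> adj A \<in> carrier_mat m n"
  unfolding mat_adjoint_def carrier_mat_def by simp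

lemma mat_adjoint_adjoint: assumes "X \<in> carrier_mat n m" shows "adj (adj X) = X"
proof (rule eq_matI)
  have a: "adj X \<in> carrier_mat m n" by (rule mat_adjoint_carrier[OF assms])
  show "dim_row (adj (adj X)) = dim_row X" "dim_col (adj (adj X)) = dim_col X"
    using mat_adjoint_carrier[OF a] assms by auto
  fix i j assume "i < dim_row X" "j < dim_col X"
  thus "adj (adj X) $$ (i, j) = X $$ (i, j)"
    using assms a by (simp add: index_mat_adjoint[OF a] index_mat_adjoint[OF assms])
qed

lemma cinner_mult_right_adjoint: assumes A: "A \<in> carrier_mat n n"
  and x: "x \<in> carrier_vec n" and y: "y \<in> carrier_vec n"
  shows "cinner x (A *\<^sub>v y) = cinner (adj A *\<^sub>v x) y"
proof -
  have Ay: "A *\<^sub>v y \<in> carrier_vec n" and Ax: "adj A *\<^sub>v x \<in> carrier_vec n"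
    using A mat_adjoint_carrier[OF A] x y by auto
  have "cinner x (A *\<^sub>v y) = (\<Sum>i<n. \<Sum>j<n. cnj (x$i) * A $$ (i,j) * y $ j)"
    using A x y by (simp add: cinner_eq_sum[OF x Ay] scalar_prod_def lessThan_atLeast0
        sum_distrib_left mult.assoc)
  also have "\<dots> = (\<Sum>j<n. (\<Sum>i<n. cnj (x$i) * A $$ (i,j)) * y $ j)"
    by (subst sum.swap) (simp add: sum_distrib_right)
  also have "\<dots> = (\<Sum>j<n. cnj (\<Sum>i<n. adj A $$ (j,i) * x $ i) * y $ j)"
    using A by (auto intro!: sum.cong simp: index_mat_adjoint[OF A] mult.commute)
  also have "\<dots> = cinner (adj A *\<^sub>v x) y"
    using A mat_adjoint_carrier[OF A] x y
    by (simp add: cinner_eq_sum[OF Ax y] scalar_prod_def lessThan_atLeast0)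
  finally show ?thesis .
qed

lemma cinner_adjoint_mult_right: assumes X: "X \<in> carrier_mat n n"
  and x: "x \<in> carrier_vec n" and y: "y \<in> carrier_vec n"
  shows "cinner x (adj X *\<^sub>v y) = cinner (X *\<^sub>v x) y"
  using cinner_mult_right_adjoint[OF mat_adjoint_carrier[OF X] x y] mat_adjoint_adjoint[OF X] by simp

lemma cinner_adjoint_self_mult: assumes X: "X \<in> carrier_mat n n"
  and x: "x \<in> carrier_vec n" and y: "y \<in> carrier_vec n"
  shows "cinner x ((adj X * X) *\<^sub>v y) = cinner (X *\<^sub>v x) (X *\<^sub>v y)"
proof -
  have "(adj X * X) *\<^sub>v y = adj X *\<^sub>v (X *\<^sub>v y)"
    using X mat_adjoint_carrier[OF X] y by (simp add: assoc_mult_mat_vec[of _ n n _ n])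
  thus ?thesis using cinner_adjoint_mult_right[OF X x] X y by simp
qed

lemma hermitian_cinner: "hermitian n H \<Longrightarrow> x \<in> carrier_vec n \<Longrightarrow> y \<in> carrier_vec n \<Longrightarrow>
   cinner x (H *\<^sub>v y) = cinner (H *\<^sub>v x) y"
  unfolding hermitian_def by blast

lemma hermitian_carrier: "hermitian n H \<Longrightarrow> H \<in> carrier_mat n n"
  unfolding hermitian_def by blast

lemma hermitian_if_adjoint_eq: "P \<in> carrier_mat n n \<Longrightarrow> adj P = P \<Longrightarrow> hermitian n P"
  unfolding hermitian_def using cinner_mult_right_adjoint[of P n] by auto

lemma hermitian_adjoint_self_mult:
  assumes X: "X \<in> carrier_mat n n" shows "hermitian n (adj X * X)"
  unfolding hermitian_def
proof (intro conjI ballI)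
  show "adj X * X \<in> carrier_mat n n" using X mat_adjoint_carrier[OF X] by simp
  fix x y :: "complex vec" assume x: "x \<in> carrier_vec n" and y: "y \<in> carrier_vec n"
  have "cinner (X *\<^sub>v x) (X *\<^sub>v y) = cnj (cinner (X *\<^sub>v y) (X *\<^sub>v x))"
    using X x y by (intro cinner_commute[of _ n]) auto
  also have "\<dots> = cnj (cinner y ((adj X * X) *\<^sub>v x))"
    by (simp add: cinner_adjoint_self_mult[OF X y x])
  also have "\<dots> = cinner ((adj X * X) *\<^sub>v x) y"
    using X mat_adjoint_carrier[OF X] x y by (intro cinner_commute[symmetric, of _ n]) auto
  finally show "cinner x ((adj X * X) *\<^sub>v y) = cinner ((adj X * X) *\<^sub>v x) y"
    by (simp add: cinner_adjoint_self_mult[OF X x y])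
qed

lemma hermitian_one: "hermitian n (1\<^sub>m n)"
  unfolding hermitian_def by simp

lemma hermitian_minus: assumes A: "hermitian n A" and B: "hermitian n B"
  shows "hermitian n (A - B)"
  unfolding hermitian_def
proof (intro conjI ballI)
  have Ac: "A \<in> carrier_mat n n" and Bc: "B \<in> carrier_mat n n" using A B by (auto dest: hermitian_carrier)
  thus "A - B \<in> carrier_mat n n" by (intro minus_carrier_mat)
  fix x y :: "complex vec" assume x: "x \<in> carrier_vec n" and y: "y \<in> carrier_vec n"
  show "cinner x ((A - B) *\<^sub>v y) = cinner ((A - B) *\<^sub>v x) y"
    using minus_mult_distrib_mat_vec[OF Ac Bc] hermitian_cinner[OF A] hermitian_cinner[OF B] Ac Bc x y
    by (simp add: cinner_minus_right[of _ n] cinner_minus_left[of _ n])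
qed

lemma hermitian_sandwich: assumes Q: "hermitian n Q" and P: "hermitian n P"
  shows "hermitian n (Q * P * Q)"
  unfolding hermitian_def
proof (intro conjI ballI)
  have Qc: "Q \<in> carrier_mat n n" and Pc: "P \<in> carrier_mat n n" using Q P by (auto dest: hermitian_carrier)
  thus QPQ: "Q * P * Q \<in> carrier_mat n n" by simp
  have app: "(Q * P * Q) *\<^sub>v x = Q *\<^sub>v (P *\<^sub>v (Q *\<^sub>v x))" if "x \<in> carrier_vec n" for x
    using mult_mat_vec_assoc3[OF Qc Pc Qc that] .
  fix x y :: "complex vec" assume x: "x \<in> carrier_vec n" and y: "y \<in> carrier_vec n"
  have "cinner x (Q *\<^sub>v (P *\<^sub>v (Q *\<^sub>v y))) = cinner (Q *\<^sub>v x) (P *\<^sub>v (Q *\<^sub>v y))"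
    using Pc Qc x y by (intro hermitian_cinner[OF Q]) auto
  also have "\<dots> = cinner (P *\<^sub>v (Q *\<^sub>v x)) (Q *\<^sub>v y)"
    using Qc x y by (intro hermitian_cinner[OF P]) auto
  also have "\<dots> = cinner (Q *\<^sub>v (P *\<^sub>v (Q *\<^sub>v x))) y"
    using Pc Qc x y by (intro hermitian_cinner[OF Q]) auto
  finally show "cinner x ((Q * P * Q) *\<^sub>v y) = cinner ((Q * P * Q) *\<^sub>v x) y"
    unfolding app[OF x] app[OF y] .
qed

lemma lin_comb_carrier [simp]: "lin_comb n m c e \<in> carrier_vec n"
  unfolding lin_comb_def by simp

lemma dim_lin_comb [simp]: "dim_vec (lin_comb n m c e) = n"
  unfolding lin_comb_def by simp

lemma index_lin_comb: "a < n \<Longrightarrow> lin_comb n m c e $ a = (\<Sum>j<m. c j * e j $ a)"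
  unfolding lin_comb_def by simp

lemma lin_comb_cong: "(\<And>j. j < m \<Longrightarrow> c j = c' j) \<Longrightarrow> (\<And>j. j < m \<Longrightarrow> e j = e' j) \<Longrightarrow>
   lin_comb n m c e = lin_comb n m c' e'"
  unfolding lin_comb_def by (auto intro!: sum.cong)

lemma cinner_lin_comb_right: assumes x: "x \<in> carrier_vec n" and e: "\<forall>j<m. e j \<in> carrier_vec n"
  shows "cinner x (lin_comb n m c e) = (\<Sum>j<m. c j * cinner x (e j))"
proof -
  have "cinner x (lin_comb n m c e) = (\<Sum>i<n. \<Sum>j<m. c j * (cnj (x$i) * e j $ i))"
    by (simp add: cinner_eq_sum[OF x lin_comb_carrier] index_lin_comb sum_distrib_left
        mult.left_commute)
  also have "\<dots> = (\<Sum>j<m. c j * cinner x (e j))"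
    using e by (subst sum.swap) (auto simp: cinner_eq_sum[OF x] sum_distrib_left intro!: sum.cong)
  finally show ?thesis .
qed

lemma cinner_lin_comb_left: assumes x: "x \<in> carrier_vec n" and e: "\<forall>j<m. e j \<in> carrier_vec n"
  shows "cinner (lin_comb n m c e) x = (\<Sum>j<m. cnj (c j) * cinner (e j) x)"
proof -
  have "cinner (lin_comb n m c e) x = cnj (cinner x (lin_comb n m c e))"
    using cinner_commute[OF x lin_comb_carrier] .
  also have "\<dots> = (\<Sum>j<m. cnj (c j) * cnj (cinner x (e j)))"
    using cinner_lin_comb_right[OF x e] by simp
  also have "\<dots> = (\<Sum>j<m. cnj (c j) * cinner (e j) x)"
    using e x by (auto intro!: sum.cong simp: cinner_commute[OF x])
  finally show ?thesis .
qed

lemma mult_mat_vec_lin_comb: assumes A: "A \<in> carrier_mat n n" and e: "\<forall>j<m. e j \<in> carrier_vec n"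
  shows "A *\<^sub>v lin_comb n m c e = lin_comb n m c (\<lambda>j. A *\<^sub>v e j)"
proof (rule eq_vecI)
  fix a assume "a < dim_vec (lin_comb n m c (\<lambda>j. A *\<^sub>v e j))"
  hence a: "a < n" by simp
  have "(A *\<^sub>v lin_comb n m c e) $ a = (\<Sum>b<n. \<Sum>j<m. c j * (A $$ (a,b) * e j $ b))"
    using A a by (auto simp: scalar_prod_def lessThan_atLeast0 index_lin_comb sum_distrib_left
        mult.left_commute intro!: sum.cong)
  also have "\<dots> = lin_comb n m c (\<lambda>j. A *\<^sub>v e j) $ a"
    using A a e by (subst sum.swap) (auto simp: index_lin_comb scalar_prod_def lessThan_atLeast0
        sum_distrib_left intro!: sum.cong)
  finally show "(A *\<^sub>v lin_comb n m c e) $ a = lin_comb n m c (\<lambda>j. A *\<^sub>v e j) $ a" .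
qed (use A in simp)

lemma lin_comb_smult_vecs: assumes "\<forall>j<m. v j \<in> carrier_vec n"
  shows "lin_comb n m c (\<lambda>j. a j \<cdot>\<^sub>v v j) = lin_comb n m (\<lambda>j. c j * a j) v"
proof (rule eq_vecI)
  fix b assume "b < dim_vec (lin_comb n m (\<lambda>j. c j * a j) v)"
  hence b: "b < n" by simp
  have "(a j \<cdot>\<^sub>v v j) $ b = a j * v j $ b" if "j < m" for j
    using assms that b by (metis carrier_vecD index_smult_vec(1))
  thus "lin_comb n m c (\<lambda>j. a j \<cdot>\<^sub>v v j) $ b = lin_comb n m (\<lambda>j. c j * a j) v $ b"
    using b by (auto simp: index_lin_comb mult.assoc intro!: sum.cong)
qed simp

lemma lin_comb_delta: assumes i: "i < m" and c: "v i \<in> carrier_vec n"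
  shows "lin_comb n m (\<lambda>j. if j = i then a else 0) v = a \<cdot>\<^sub>v v i"
proof (rule eq_vecI)
  fix b assume "b < dim_vec (a \<cdot>\<^sub>v v i)"
  hence b: "b < n" using c by simp
  have "lin_comb n m (\<lambda>j. if j = i then a else 0) v $ b = (\<Sum>j<m. (if j = i then a else 0) * v j $ b)"
    using b by (simp add: index_lin_comb)
  also have "\<dots> = (\<Sum>j<m. if j = i then a * v j $ b else 0)" by (rule sum.cong) auto
  finally show "lin_comb n m (\<lambda>j. if j = i then a else 0) v $ b = (a \<cdot>\<^sub>v v i) $ b" using b c i by simp
qed (use c in simp)

lemma mult_mat_vec_lin_comb_fixed: assumes M: "M \<in> carrier_mat n n"
  and vc: "\<forall>j<m. v j \<in> carrier_vec n" and fixed: "\<forall>j<m. g j = 0 \<or> M *\<^sub>v v j = v j"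
  shows "M *\<^sub>v lin_comb n m g v = lin_comb n m g v"
proof -
  have "g j * (M *\<^sub>v v j) $ a = g j * v j $ a" if "j < m" for j a
    using fixed that by auto
  hence "lin_comb n m g (\<lambda>j. M *\<^sub>v v j) = lin_comb n m g v"
    unfolding lin_comb_def by (auto intro!: eq_vecI sum.cong)
  thus ?thesis using mult_mat_vec_lin_comb[OF M vc] by simp
qed

lemma orthonormal_carrier: "orthonormal n m e \<Longrightarrow> j < m \<Longrightarrow> e j \<in> carrier_vec n"
  unfolding orthonormal_def by auto

lemma orthonormal_cinner: "orthonormal n m e \<Longrightarrow> i < m \<Longrightarrow> j < m \<Longrightarrow>
   cinner (e i) (e j) = (if i = j then 1 else 0)"
  unfolding orthonormal_def by auto

lemma orthonormal_mono: "orthonormal n m v \<Longrightarrow> k \<le> m \<Longrightarrow> orthonormal n k v"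
  unfolding orthonormal_def by auto

lemma cinner_orthonormal_lin_comb: assumes o: "orthonormal n m e" and i: "i < m"
  shows "cinner (e i) (lin_comb n m c e) = c i"
proof -
  have "cinner (e i) (lin_comb n m c e) = (\<Sum>j<m. c j * (if i = j then 1 else 0))"
    using o i by (simp add: cinner_lin_comb_right[of _ n] orthonormal_carrier orthonormal_cinner)
  also have "\<dots> = c i" using i by (simp add: if_distrib cong: if_cong)
  finally show ?thesis .
qed

definition basis_mat :: "nat \<Rightarrow> (nat \<Rightarrow> complex vec) \<Rightarrow> complex mat" where
  "basis_mat n e = mat n n (\<lambda>(a,j). e j $ a)"

lemma basis_mat_carrier [simp]: "basis_mat n e \<in> carrier_mat n n"
  "dim_row (basis_mat n e) = n" "dim_col (basis_mat n e) = n"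
  unfolding basis_mat_def by simp_all

lemma col_basis_mat: "j < n \<Longrightarrow> e j \<in> carrier_vec n \<Longrightarrow> col (basis_mat n e) j = e j"
  by (rule eq_vecI) (auto simp: basis_mat_def)

lemma adjoint_basis_mat: "adj (basis_mat n e) = mat n n (\<lambda>(j,a). cnj (e j $ a))"
  using mat_adjoint_carrier[OF basis_mat_carrier(1), of n e]
  by (intro eq_matI) (auto simp: index_mat_adjoint[of _ n n] basis_mat_def)

text \<open>Completeness of an orthonormal family of \<open>n\<close> vectors in \<open>\<complex>\<^sup>n\<close> comes from the fact that a
  left inverse of a square matrix is also a right inverse.\<close>

lemma basis_mat_unitary: assumes o: "orthonormal n n e"
  shows "adj (basis_mat n e) * basis_mat n e = 1\<^sub>m n" "basis_mat n e * adj (basis_mat n e) = 1\<^sub>m n"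
proof -
  show 1: "adj (basis_mat n e) * basis_mat n e = 1\<^sub>m n"
  proof (rule eq_matI)
    fix i j assume i: "i < dim_row (1\<^sub>m n :: complex mat)" and j: "j < dim_col (1\<^sub>m n :: complex mat)"
    have "(adj (basis_mat n e) * basis_mat n e) $$ (i,j) = cinner (e i) (e j)"
      unfolding adjoint_basis_mat using i j o
      by (auto simp: basis_mat_def scalar_prod_def lessThan_atLeast0 cinner_eq_sum[of _ n]
          orthonormal_carrier intro!: sum.cong)
    thus "(adj (basis_mat n e) * basis_mat n e) $$ (i,j) = 1\<^sub>m n $$ (i,j)"
      using o i j by (simp add: orthonormal_cinner)
  qed (auto simp: adjoint_basis_mat)
  show "basis_mat n e * adj (basis_mat n e) = 1\<^sub>m n"
    by (rule mat_mult_left_right_inverse[OF _ _ 1]) (auto simp: adjoint_basis_mat)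
qed

lemma orthonormal_basis_expansion: assumes o: "orthonormal n n e" and x: "x \<in> carrier_vec n"
  shows "x = lin_comb n n (\<lambda>j. cinner (e j) x) e"
proof -
  let ?Q = "basis_mat n e"
  have aQ: "adj ?Q \<in> carrier_mat n n" by (simp add: adjoint_basis_mat)
  have "x = (?Q * adj ?Q) *\<^sub>v x" using basis_mat_unitary[OF o] x by simp
  also have "\<dots> = ?Q *\<^sub>v (adj ?Q *\<^sub>v x)" using aQ x by (simp add: assoc_mult_mat_vec[of _ n n _ n])
  also have "\<dots> = lin_comb n n (\<lambda>j. cinner (e j) x) e"
  proof (rule eq_vecI)
    fix a assume "a < dim_vec (lin_comb n n (\<lambda>j. cinner (e j) x) e)"
    hence a: "a < n" by simp
    have "(?Q *\<^sub>v (adj ?Q *\<^sub>v x)) $ a = (\<Sum>j<n. e j $ a * (adj ?Q *\<^sub>v x) $ j)"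
      using a aQ by (auto simp: basis_mat_def scalar_prod_def lessThan_atLeast0 intro!: sum.cong)
    also have "\<dots> = (\<Sum>j<n. e j $ a * cinner (e j) x)"
      using a x o by (auto simp: adjoint_basis_mat scalar_prod_def lessThan_atLeast0
          cinner_eq_sum[of _ n] orthonormal_carrier intro!: sum.cong)
    finally show "(?Q *\<^sub>v (adj ?Q *\<^sub>v x)) $ a = lin_comb n n (\<lambda>j. cinner (e j) x) e $ a"
      using a by (simp add: index_lin_comb mult.commute)
  qed (simp add: aQ)
  finally show ?thesis .
qed

lemma sum_lessThan_split: fixes g :: "nat \<Rightarrow> 'a::comm_monoid_add"
  shows "k \<le> n \<Longrightarrow> (\<Sum>j<n. g j) = (\<Sum>j<k. g j) + (\<Sum>j\<in>{k..<n}. g j)"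
  using sum.atLeastLessThan_concat[of 0 k n g] by (simp add: atLeast0LessThan)

lemma orthonormal_basis_expansion_prefix: assumes of: "orthonormal n n f" and kn: "k \<le> n"
  and x: "x \<in> carrier_vec n" and z: "\<forall>j. k \<le> j \<longrightarrow> j < n \<longrightarrow> cinner (f j) x = 0"
  shows "x = lin_comb n k (\<lambda>i. cinner (f i) x) f"
proof -
  have "(\<Sum>j<n. cinner (f j) x * f j $ a) = (\<Sum>j<k. cinner (f j) x * f j $ a)" for a
    using sum_lessThan_split[OF kn, of "\<lambda>j. cinner (f j) x * f j $ a"] z by simp
  hence "lin_comb n n (\<lambda>j. cinner (f j) x) f = lin_comb n k (\<lambda>i. cinner (f i) x) f"
    unfolding lin_comb_def by simp
  thus ?thesis using orthonormal_basis_expansion[OF of x] by simp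
qed

lemma orthonormal_basis_eqI: assumes o: "orthonormal n n e"
  and x: "x \<in> carrier_vec n" and y: "y \<in> carrier_vec n"
  and eq: "\<And>j. j < n \<Longrightarrow> cinner (e j) x = cinner (e j) y"
  shows "x = y"
  using orthonormal_basis_expansion[OF o x] orthonormal_basis_expansion[OF o y] eq
    lin_comb_cong[of n "\<lambda>j. cinner (e j) x" "\<lambda>j. cinner (e j) y" e e n] by simp

lemma mat_eq_on_orthonormal_basis: assumes A: "A \<in> carrier_mat n n" and B: "B \<in> carrier_mat n n"
  and o: "orthonormal n n v" and eq: "\<And>j. j < n \<Longrightarrow> A *\<^sub>v v j = B *\<^sub>v v j"
  shows "A = B"
proof -
  have vc: "\<forall>j<n. v j \<in> carrier_vec n" using o by (simp add: orthonormal_carrier)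
  have ax: "A *\<^sub>v x = B *\<^sub>v x" if x: "x \<in> carrier_vec n" for x
  proof -
    let ?c = "\<lambda>j. cinner (v j) x"
    have "A *\<^sub>v x = lin_comb n n ?c (\<lambda>j. A *\<^sub>v v j)"
      using orthonormal_basis_expansion[OF o x] mult_mat_vec_lin_comb[OF A vc] by metis
    also have "\<dots> = lin_comb n n ?c (\<lambda>j. B *\<^sub>v v j)" by (rule lin_comb_cong) (simp_all add: eq)
    also have "\<dots> = B *\<^sub>v x"
      using orthonormal_basis_expansion[OF o x] mult_mat_vec_lin_comb[OF B vc] by metis
    finally show ?thesis .
  qed
  show ?thesis
  proof (rule eq_matI)
    fix i j assume i: "i < dim_row B" and j: "j < dim_col B"
    have "A $$ (i,j) = (A *\<^sub>v unit_vec n j) $ i" using A B i j by simp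
    also have "\<dots> = (B *\<^sub>v unit_vec n j) $ i" using ax[of "unit_vec n j"] by simp
    also have "\<dots> = B $$ (i,j)" using B i j by simp
    finally show "A $$ (i,j) = B $$ (i,j)" .
  qed (use A B in auto)
qed

lemma parseval: assumes o: "orthonormal n n e" and x: "x \<in> carrier_vec n" and y: "y \<in> carrier_vec n"
  shows "cinner x y = (\<Sum>j<n. cinner x (e j) * cinner (e j) y)"
proof -
  have "cinner x y = cinner x (lin_comb n n (\<lambda>j. cinner (e j) y) e)"
    using orthonormal_basis_expansion[OF o y] by simp
  thus ?thesis using o x by (simp add: cinner_lin_comb_right orthonormal_carrier mult.commute)
qed

lemma parseval_real: assumes o: "orthonormal n n e" and x: "x \<in> carrier_vec n"
  shows "(\<Sum>j<n. (cmod (cinner (e j) x))\<^sup>2) = Re (cinner x x)"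
proof -
  have "cinner x (e j) = cnj (cinner (e j) x)" if "j < n" for j
    using o x that by (intro cinner_commute) (auto simp: orthonormal_carrier)
  hence "cinner x x = (\<Sum>j<n. cnj (cinner (e j) x) * cinner (e j) x)"
    using parseval[OF o x x] by simp
  thus ?thesis by (simp add: cnj_mult_self flip: of_real_sum)
qed

definition orth_residual :: "nat \<Rightarrow> nat \<Rightarrow> (nat \<Rightarrow> complex vec) \<Rightarrow> complex vec \<Rightarrow> complex vec" where
  "orth_residual n m v x = x - lin_comb n m (\<lambda>i. cinner (v i) x) v"

lemma orth_residual_carrier: "x \<in> carrier_vec n \<Longrightarrow> orth_residual n m v x \<in> carrier_vec n"
  unfolding orth_residual_def by simp

lemma cinner_orth_residual: assumes o: "orthonormal n m v" and x: "x \<in> carrier_vec n" and i: "i < m"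
  shows "cinner (v i) (orth_residual n m v x) = 0"
  unfolding orth_residual_def using o x i
  by (simp add: cinner_minus_right[of _ n] orthonormal_carrier cinner_orthonormal_lin_comb)

lemma cinner_self_orth_residual: assumes o: "orthonormal n m v" and x: "x \<in> carrier_vec n"
  shows "cinner (orth_residual n m v x) (orth_residual n m v x) =
    cinner x x - (\<Sum>i<m. cnj (cinner (v i) x) * cinner (v i) x)"
proof -
  let ?z = "orth_residual n m v x" and ?l = "lin_comb n m (\<lambda>i. cinner (v i) x) v"
  have z: "?z \<in> carrier_vec n" using x by (rule orth_residual_carrier)
  have vc: "\<forall>j<m. v j \<in> carrier_vec n" using o by (simp add: orthonormal_carrier)
  have "cinner ?z (v j) = 0" if "j < m" for j
    using cinner_orth_residual[OF o x that] cinner_commute[OF _ z, of "v j"] vc that by simp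
  hence zl: "cinner ?z ?l = 0" using z vc by (simp add: cinner_lin_comb_right)
  have "cinner ?z ?z = cinner ?z x - cinner ?z ?l"
    by (subst (2) orth_residual_def) (simp add: cinner_minus_right[OF z x lin_comb_carrier])
  also have "\<dots> = cinner x x - cinner ?l x"
    using zl by (subst orth_residual_def) (simp add: cinner_minus_left[OF x x lin_comb_carrier])
  also have "cinner ?l x = (\<Sum>i<m. cnj (cinner (v i) x) * cinner (v i) x)"
    using x vc by (simp add: cinner_lin_comb_left)
  finally show ?thesis .
qed

lemma bessel_inequality: assumes o: "orthonormal n m v" and x: "x \<in> carrier_vec n"
  shows "(\<Sum>i<m. (cmod (cinner (v i) x))\<^sup>2) \<le> Re (cinner x x)"
proof -
  let ?z = "orth_residual n m v x"
  have "Re (cinner ?z ?z) = Re (cinner x x) - (\<Sum>i<m. (cmod (cinner (v i) x))\<^sup>2)"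
    using cinner_self_orth_residual[OF o x] by (simp add: cnj_mult_self flip: of_real_sum)
  thus ?thesis using Re_cinner_self_nonneg[OF orth_residual_carrier[OF x, where m = m and v = v]] by simp
qed

lemma in_span_if_bessel_eq: assumes oq: "orthonormal n k q" and x: "x \<in> carrier_vec n"
  and xx: "cinner x x = 1" and eq: "(\<Sum>i<k. (cmod (cinner (q i) x))\<^sup>2) = 1"
  shows "x = lin_comb n k (\<lambda>i. cinner (q i) x) q"
proof -
  let ?z = "orth_residual n k q x"
  have "cinner ?z ?z = 1 - of_real (\<Sum>i<k. (cmod (cinner (q i) x))\<^sup>2)"
    using cinner_self_orth_residual[OF oq x] xx by (simp add: cnj_mult_self of_real_sum)
  hence "?z = 0\<^sub>v n" using eq cinner_self_eq_zero[OF orth_residual_carrier[OF x]] by simp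
  thus ?thesis unfolding orth_residual_def by (rule vec_eq_if_minus_eq_zero[OF x lin_comb_carrier])
qed

lemma sum_cmod_cinner_sq_le_one: assumes x: "orthonormal n k x"
  and v: "v \<in> carrier_vec n" and vv: "cinner v v = 1"
  shows "(\<Sum>i<k. (cmod (cinner (x i) v))\<^sup>2) \<le> 1"
  using bessel_inequality[OF x v] vv by simp

lemma sum_sum_cmod_cinner_sq: assumes e: "orthonormal n n e" and x: "orthonormal n k x"
  shows "(\<Sum>j<n. \<Sum>i<k. (cmod (cinner (x i) (e j)))\<^sup>2) = real k"
proof -
  have "(\<Sum>j<n. \<Sum>i<k. (cmod (cinner (x i) (e j)))\<^sup>2) = (\<Sum>i<k. \<Sum>j<n. (cmod (cinner (e j) (x i)))\<^sup>2)"
    using e x by (subst sum.swap) (auto intro!: sum.cong simp: cmod_cinner_commute[of _ n]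
        orthonormal_carrier)
  also have "\<dots> = (\<Sum>i<k. Re (cinner (x i) (x i)))"
    using parseval_real[OF e] x by (simp add: orthonormal_carrier)
  also have "\<dots> = real k" using x by (simp add: orthonormal_cinner)
  finally show ?thesis .
qed

lemma exists_unit_multiple: assumes z: "z \<in> carrier_vec n" and nz: "z \<noteq> 0\<^sub>v n"
  shows "\<exists>s. cinner (s \<cdot>\<^sub>v z) (s \<cdot>\<^sub>v z) = 1"
proof -
  let ?r = "Re (cinner z z)"
  have r: "cinner z z = of_real ?r" by (rule cinner_self_real[OF z])
  have "?r \<noteq> 0" using cinner_self_eq_zero[OF z] nz r by force
  hence rp: "?r > 0" using Re_cinner_self_nonneg[OF z] by simp
  let ?s = "complex_of_real (1 / sqrt ?r)"
  have "cinner (?s \<cdot>\<^sub>v z) (?s \<cdot>\<^sub>v z) = cnj ?s * ?s * cinner z z"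
    using z by (simp add: cinner_smult_left[of _ n] cinner_smult_right[of _ n])
  also have "\<dots> = of_real ((1 / sqrt ?r) * (1 / sqrt ?r) * ?r)"
    by (subst r) (simp only: complex_cnj_complex_of_real of_real_mult)
  also have "(1 / sqrt ?r) * (1 / sqrt ?r) * ?r = 1"
    using rp real_sqrt_mult_self[of ?r] by (simp add: field_simps)
  finally show ?thesis by (intro exI[of _ ?s]) simp
qed

text \<open>If every unit vector lay in the span of \<open>v\<close>, Bessel's equality would give
  \<open>n = \<Sum>a<n. \<Sum>i<m. |v i $ a|\<^sup>2 = m\<close>; so some residual of a unit vector is nonzero.\<close>

lemma exists_unit_orthogonal: assumes o: "orthonormal n m v" and mn: "m < n"
  shows "\<exists>x\<in>carrier_vec n. cinner x x = 1 \<and> (\<forall>i<m. cinner (v i) x = 0)"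
proof (cases "\<exists>a<n. orth_residual n m v (unit_vec n a) \<noteq> 0\<^sub>v n")
  case True
  then obtain a where nz: "orth_residual n m v (unit_vec n a) \<noteq> 0\<^sub>v n" by auto
  let ?z = "orth_residual n m v (unit_vec n a)"
  have z: "?z \<in> carrier_vec n" by (rule orth_residual_carrier) simp
  obtain s where "cinner (s \<cdot>\<^sub>v ?z) (s \<cdot>\<^sub>v ?z) = 1" using exists_unit_multiple[OF z nz] by blast
  moreover have "\<forall>i<m. cinner (v i) (s \<cdot>\<^sub>v ?z) = 0"
    using cinner_orth_residual[OF o] z o by (simp add: cinner_smult_right[of _ n] orthonormal_carrier)
  ultimately show ?thesis using z by (intro bexI[of _ "s \<cdot>\<^sub>v ?z"]) auto
next
  case False
  have vc: "\<And>i. i < m \<Longrightarrow> v i \<in> carrier_vec n" using o by (simp add: orthonormal_carrier)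
  have eq: "(1::complex) = (\<Sum>i<m. cnj (v i $ a) * v i $ a)" if a: "a < n" for a
  proof -
    have "cinner (unit_vec n a) (unit_vec n a) =
        (\<Sum>i<m. cnj (cinner (v i) (unit_vec n a)) * cinner (v i) (unit_vec n a))"
      using False a cinner_self_orth_residual[OF o, of "unit_vec n a"] by simp
    thus ?thesis using a vc by (simp add: cinner_unit_vec mult.commute)
  qed
  have "(of_nat n :: complex) = (\<Sum>a<n. 1)" by simp
  also have "\<dots> = (\<Sum>a<n. \<Sum>i<m. cnj (v i $ a) * v i $ a)" using eq by (intro sum.cong) auto
  also have "\<dots> = (\<Sum>i<m. cinner (v i) (v i))"
    using vc by (subst sum.swap) (simp add: cinner_eq_sum[of _ n])
  also have "\<dots> = of_nat m" using o by (simp add: orthonormal_cinner)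
  finally show ?thesis using mn by simp
qed

lemma orthonormal_extend_one: assumes o: "orthonormal n m v" and x: "x \<in> carrier_vec n"
  and xx: "cinner x x = 1" and ox: "\<forall>i<m. cinner (v i) x = 0"
  shows "orthonormal n (Suc m) (v(m := x))"
proof -
  have c: "\<And>i. i < m \<Longrightarrow> v i \<in> carrier_vec n" using o by (simp add: orthonormal_carrier)
  have "cinner x (v j) = 0" if "j < m" for j
    using ox c x that by (metis cinner_commute complex_cnj_zero)
  thus ?thesis using o ox xx x c unfolding orthonormal_def by (auto simp: less_Suc_eq)
qed

lemma orthonormal_extend_basis: assumes o: "orthonormal n m v" and mn: "m \<le> n"
  shows "\<exists>w. orthonormal n n w \<and> (\<forall>i<m. w i = v i)"
  using o mn
proof (induction "n - m" arbitrary: m v)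
  case 0
  thus ?case by auto
next
  case (Suc d)
  have "m < n" using Suc.hyps(2) by simp
  then obtain x where x: "x \<in> carrier_vec n" "cinner x x = 1" "\<forall>i<m. cinner (v i) x = 0"
    using exists_unit_orthogonal[OF Suc.prems(1)] by auto
  have "d = n - Suc m" "Suc m \<le> n" using Suc.hyps(2) by simp_all
  then obtain w where "orthonormal n n w" "\<forall>i<Suc m. w i = (v(m := x)) i"
    using Suc.hyps(1)[of "Suc m" "v(m := x)"] orthonormal_extend_one[OF Suc.prems(1) x] by blast
  thus ?case by (intro exI[of _ w]) auto
qed

lemma unitary_cinner: assumes U: "unitary_mat n U" and x: "x \<in> carrier_vec n" and y: "y \<in> carrier_vec n"
  shows "cinner (U *\<^sub>v x) (U *\<^sub>v y) = cinner x y"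
proof -
  have Uc: "U \<in> carrier_mat n n" and UU: "adj U * U = 1\<^sub>m n" using U unfolding unitary_mat_def by auto
  have "cinner (U *\<^sub>v x) (U *\<^sub>v y) = cinner x ((adj U * U) *\<^sub>v y)"
    by (rule cinner_adjoint_self_mult[OF Uc x y, symmetric])
  thus ?thesis using UU y by simp
qed

lemma unitary_orthonormal: "unitary_mat n U \<Longrightarrow> orthonormal n m v \<Longrightarrow> orthonormal n m (\<lambda>i. U *\<^sub>v v i)"
  unfolding orthonormal_def by (auto simp: unitary_cinner unitary_mat_def)

lemma unitary_adjoint: assumes "unitary_mat n U" shows "unitary_mat n (adj U)"
  using assms mat_adjoint_carrier[of U n n] mat_adjoint_adjoint[of U n n]
  unfolding unitary_mat_def by simp

section \<open>The spectral theorem for Hermitian matrices\<close>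

definition orthonormal_eigenvectors ::
  "nat \<Rightarrow> nat \<Rightarrow> complex mat \<Rightarrow> (nat \<Rightarrow> complex vec) \<Rightarrow> (nat \<Rightarrow> real) \<Rightarrow> bool" where
  "orthonormal_eigenvectors n m H e s \<longleftrightarrow>
     orthonormal n m e \<and> (\<forall>j<m. H *\<^sub>v e j = complex_of_real (s j) \<cdot>\<^sub>v e j)"

lemma orthonormal_eigenvectorsD: assumes "orthonormal_eigenvectors n m H e s"
  shows "orthonormal n m e" and "\<And>j. j < m \<Longrightarrow> e j \<in> carrier_vec n"
    and "\<And>j. j < m \<Longrightarrow> H *\<^sub>v e j = complex_of_real (s j) \<cdot>\<^sub>v e j"
  using assms unfolding orthonormal_eigenvectors_def by (auto simp: orthonormal_carrier)

lemma antimono_on_lessThanD: fixes s :: "nat \<Rightarrow> 'a::order"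
  assumes "antimono_on {..<n} s" "i \<le> j" "j < n" shows "s j \<le> s i"
proof -
  have "i < n" using assms(2,3) by linarith
  thus ?thesis using monotone_onD[OF assms(1), of i j] assms(2,3) by simp
qed

lemma hermitian_eigenvalue_real: assumes H: "hermitian n H" and x: "x \<in> carrier_vec n"
  and xx: "cinner x x = 1" and Hx: "H *\<^sub>v x = a \<cdot>\<^sub>v x"
  shows "a = of_real (Re a)"
proof -
  have "a = cinner x (H *\<^sub>v x)" using Hx x xx by (simp add: cinner_smult_right[of _ n])
  also have "\<dots> = cinner (H *\<^sub>v x) x" using hermitian_cinner[OF H x x] .
  also have "\<dots> = cnj a" using Hx x xx by (simp add: cinner_smult_left[of _ n])
  finally have "Im a = Im (cnj a)" by simp
  thus ?thesis by (simp add: complex_eq_iff)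
qed

lemma cinner_eigenvector_hermitian: assumes H: "hermitian n H" and v: "v \<in> carrier_vec n"
  and ev: "H *\<^sub>v v = complex_of_real l \<cdot>\<^sub>v v" and y: "y \<in> carrier_vec n"
  shows "cinner v (H *\<^sub>v y) = of_real l * cinner v y"
  using hermitian_cinner[OF H v y] ev v y by (simp add: cinner_smult_left[of _ n])

lemma hermitian_eigenvectors_orthogonal: assumes H: "hermitian n H"
  and u: "u \<in> carrier_vec n" and v: "v \<in> carrier_vec n"
  and Hu: "H *\<^sub>v u = complex_of_real a \<cdot>\<^sub>v u" and Hv: "H *\<^sub>v v = complex_of_real b \<cdot>\<^sub>v v" and ab: "a \<noteq> b"
  shows "cinner u v = 0"
proof -
  have "of_real a * cinner u v = cinner u (H *\<^sub>v v)" by (rule cinner_eigenvector_hermitian[OF H u Hu v, symmetric])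
  also have "\<dots> = of_real b * cinner u v" unfolding Hv by (rule cinner_smult_right[OF u v])
  finally show ?thesis using ab by simp
qed

lemma square_mat_eigenvector_exists: assumes C: "(C :: complex mat) \<in> carrier_mat d d" and d: "0 < d"
  shows "\<exists>c a. c \<in> carrier_vec d \<and> c \<noteq> 0\<^sub>v d \<and> C *\<^sub>v c = a \<cdot>\<^sub>v c"
proof -
  obtain as where as: "char_poly C = (\<Prod>a\<leftarrow>as. [:- a, 1:])" "length as = d"
    using char_poly_factorized[OF C] by auto
  then obtain a rest where "as = a # rest" using d by (cases as) auto
  hence "eigenvalue C a" using eigenvalue_root_char_poly[OF C] as(1) by simp
  thus ?thesis unfolding eigenvalue_def eigenvector_def using C by auto
qed

lemma cinner_lin_comb_shifted: assumes w: "orthonormal n n w" and j: "j < n"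
  shows "cinner (w j) (lin_comb n (n - m) c (\<lambda>b. w (m + b))) = (if j < m then 0 else c (j - m))"
proof -
  have "cinner (w j) (lin_comb n (n - m) c (\<lambda>b. w (m + b))) =
      (\<Sum>b<n - m. c b * (if j = m + b then 1 else 0))"
    using w j by (auto simp: cinner_lin_comb_right orthonormal_carrier orthonormal_cinner intro!: sum.cong)
  also have "\<dots> = (\<Sum>b<n - m. if b = j - m then (if j < m then 0 else c b) else 0)"
    by (rule sum.cong) auto
  finally show ?thesis using j by auto
qed

text \<open>The orthogonal complement of eigenvectors of a Hermitian \<open>H\<close> is \<open>H\<close>-invariant, so an
  eigenvector of the compression of \<open>H\<close> to that complement is an eigenvector of \<open>H\<close>.\<close>

lemma hermitian_eigenvector_in_complement:
  assumes H: "hermitian n H" and w: "orthonormal n n w"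
    and ev: "\<forall>i<m. H *\<^sub>v w i = lam i \<cdot>\<^sub>v w i" and mn: "m < n"
  shows "\<exists>x a. x \<in> carrier_vec n \<and> x \<noteq> 0\<^sub>v n \<and> (\<forall>i<m. cinner (w i) x = 0) \<and> H *\<^sub>v x = a \<cdot>\<^sub>v x"
proof -
  have Hc: "H \<in> carrier_mat n n" using H by (rule hermitian_carrier)
  have wc: "\<And>j. j < n \<Longrightarrow> w j \<in> carrier_vec n" using w by (simp add: orthonormal_carrier)
  define d where "d = n - m"
  define W where "W = (\<lambda>b. w (m + b))"
  have Wc: "\<forall>b<d. W b \<in> carrier_vec n" unfolding W_def d_def using wc by auto
  define C where "C = mat d d (\<lambda>(a,b). cinner (W a) (H *\<^sub>v W b))"
  obtain c a0 where c: "c \<in> carrier_vec d" "c \<noteq> 0\<^sub>v d" "C *\<^sub>v c = a0 \<cdot>\<^sub>v c"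
    using square_mat_eigenvector_exists[of C d] mn unfolding C_def d_def by auto
  define x where "x = lin_comb n d (\<lambda>b. c $ b) W"
  have xc: "x \<in> carrier_vec n" unfolding x_def by simp
  have coeff: "cinner (w j) x = (if j < m then 0 else c $ (j - m))" if "j < n" for j
    unfolding x_def W_def d_def using cinner_lin_comb_shifted[OF w that] .
  have "H *\<^sub>v x = a0 \<cdot>\<^sub>v x"
  proof (rule orthonormal_basis_eqI[OF w])
    fix j assume j: "j < n"
    show "cinner (w j) (H *\<^sub>v x) = cinner (w j) (a0 \<cdot>\<^sub>v x)"
    proof (cases "j < m")
      case True
      have "cinner (w j) (H *\<^sub>v x) = cnj (lam j) * cinner (w j) x"
        using hermitian_cinner[OF H wc[OF j] xc] ev True wc[OF j] xc
        by (simp add: cinner_smult_left[of _ n])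
      thus ?thesis using True coeff[OF j] wc[OF j] xc by (simp add: cinner_smult_right[of _ n])
    next
      case False
      define a where "a = j - m"
      have a: "a < d" and ja: "j = m + a" using False j d_def a_def by auto
      have "cinner (w j) (H *\<^sub>v x) = (\<Sum>b<d. c $ b * cinner (W a) (H *\<^sub>v W b))"
        unfolding x_def mult_mat_vec_lin_comb[OF Hc Wc] using Wc a Hc
        by (simp add: cinner_lin_comb_right W_def ja)
      also have "\<dots> = (C *\<^sub>v c) $ a" using a c(1)
        by (auto simp: C_def scalar_prod_def lessThan_atLeast0 mult.commute intro!: sum.cong)
      finally show ?thesis using c a coeff[OF j] False wc[OF j] xc
        by (simp add: cinner_smult_right[of _ n] a_def)
    qed
  qed (use Hc xc in auto)
  moreover have "x \<noteq> 0\<^sub>v n"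
  proof
    assume "x = 0\<^sub>v n"
    hence "c $ a = 0" if "a < d" for a using coeff[of "m + a"] wc that d_def by auto
    thus False using c(1,2) by (auto intro!: eq_vecI)
  qed
  ultimately show ?thesis using xc coeff mn by auto
qed

lemma hermitian_eigenvector_orthogonal:
  assumes H: "hermitian n H" and ev: "orthonormal_eigenvectors n m H v lam" and mn: "m < n"
  shows "\<exists>x \<mu>. x \<in> carrier_vec n \<and> cinner x x = 1 \<and> (\<forall>i<m. cinner (v i) x = 0) \<and>
           H *\<^sub>v x = complex_of_real \<mu> \<cdot>\<^sub>v x"
proof -
  have o: "orthonormal n m v" using ev unfolding orthonormal_eigenvectors_def by blast
  obtain w where w: "orthonormal n n w" and wv: "\<forall>i<m. w i = v i"
    using orthonormal_extend_basis[OF o] mn by fastforce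
  have evw: "\<forall>i<m. H *\<^sub>v w i = complex_of_real (lam i) \<cdot>\<^sub>v w i"
    using ev wv unfolding orthonormal_eigenvectors_def by simp
  obtain x0 a where x0: "x0 \<in> carrier_vec n" "x0 \<noteq> 0\<^sub>v n" "\<forall>i<m. cinner (w i) x0 = 0"
    and Hx0: "H *\<^sub>v x0 = a \<cdot>\<^sub>v x0"
    using hermitian_eigenvector_in_complement[OF H w evw mn] by blast
  obtain s where s: "cinner (s \<cdot>\<^sub>v x0) (s \<cdot>\<^sub>v x0) = 1" using exists_unit_multiple[OF x0(1,2)] by blast
  have Hx: "H *\<^sub>v (s \<cdot>\<^sub>v x0) = a \<cdot>\<^sub>v (s \<cdot>\<^sub>v x0)"
    using hermitian_carrier[OF H] x0(1) Hx0 by (simp add: mult_mat_vec smult_smult_assoc mult.commute)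
  have "a = of_real (Re a)" by (rule hermitian_eigenvalue_real[OF H _ s Hx]) (use x0 in simp)
  moreover have "\<forall>i<m. cinner (v i) (s \<cdot>\<^sub>v x0) = 0"
    using x0 wv o by (auto simp: cinner_smult_right[of _ n] orthonormal_carrier)
  ultimately show ?thesis using x0(1) s Hx by (metis smult_carrier_vec)
qed

lemma hermitian_eigenbasis_exists: assumes H: "hermitian n H"
  shows "\<exists>v lam. orthonormal_eigenvectors n n H v lam"
proof -
  have "m \<le> n \<Longrightarrow> \<exists>v lam. orthonormal_eigenvectors n m H v lam" for m
  proof (induction m)
    case 0
    show ?case by (auto simp: orthonormal_eigenvectors_def orthonormal_def)
  next
    case (Suc m)
    then obtain v lam where ev: "orthonormal_eigenvectors n m H v lam" by auto
    then obtain x \<mu> where x: "x \<in> carrier_vec n" "cinner x x = 1" "\<forall>i<m. cinner (v i) x = 0"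
      "H *\<^sub>v x = of_real \<mu> \<cdot>\<^sub>v x"
      using hermitian_eigenvector_orthogonal[OF H ev] Suc.prems by auto
    have "orthonormal n (Suc m) (v(m := x))"
      using orthonormal_extend_one[OF _ x(1-3)] ev unfolding orthonormal_eigenvectors_def by blast
    hence "orthonormal_eigenvectors n (Suc m) H (v(m := x)) (lam(m := \<mu>))"
      using ev x(4) unfolding orthonormal_eigenvectors_def by (auto simp: less_Suc_eq)
    thus ?case by blast
  qed
  thus ?thesis by simp
qed

lemma hermitian_sorted_eigenbasis_exists: assumes H: "hermitian n H"
  shows "\<exists>v lam. orthonormal_eigenvectors n n H v lam \<and> antimono_on {..<n} lam"
proof -
  obtain v lam where ev: "orthonormal_eigenvectors n n H v lam"
    using hermitian_eigenbasis_exists[OF H] by auto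
  define js where "js = sort_key (\<lambda>j. - lam j) [0..<n]"
  have ljs: "length js = n" and sjs: "set js = {..<n}" and djs: "distinct js"
    unfolding js_def by auto
  have sorted: "sorted (map (\<lambda>j. - lam j) js)" unfolding js_def by (rule sorted_sort_key)
  have jslt: "\<And>i. i < n \<Longrightarrow> js ! i < n" using sjs ljs nth_mem by fastforce
  have jsinj: "\<And>i j. i < n \<Longrightarrow> j < n \<Longrightarrow> js ! i = js ! j \<Longrightarrow> i = j"
    using djs ljs nth_eq_iff_index_eq by blast
  have "orthonormal_eigenvectors n n H (\<lambda>i. v (js ! i)) (\<lambda>i. lam (js ! i))"
    using ev jslt jsinj unfolding orthonormal_eigenvectors_def orthonormal_def by auto
  moreover have "antimono_on {..<n} (\<lambda>i. lam (js ! i))"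
  proof (rule monotone_onI)
    fix i j assume "i \<in> {..<n}" "j \<in> {..<n}" "i \<le> j"
    thus "lam (js ! j) \<le> lam (js ! i)"
      using sorted_nth_mono[OF sorted, of i j] ljs by simp
  qed
  ultimately show ?thesis by blast
qed

lemma quadratic_form_eigenbasis: assumes P: "P \<in> carrier_mat n n"
  and ev: "orthonormal_eigenvectors n n P e s" and x: "x \<in> carrier_vec n"
  shows "cinner x (P *\<^sub>v x) = of_real (\<Sum>j<n. s j * (cmod (cinner (e j) x))\<^sup>2)"
proof -
  note oe = orthonormal_eigenvectorsD(1)[OF ev]
  have ec: "\<forall>j<n. e j \<in> carrier_vec n" using orthonormal_eigenvectorsD(2)[OF ev] by blast
  have "P *\<^sub>v x = P *\<^sub>v lin_comb n n (\<lambda>j. cinner (e j) x) e"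
    using orthonormal_basis_expansion[OF oe x] by simp
  also have "\<dots> = lin_comb n n (\<lambda>j. cinner (e j) x) (\<lambda>j. P *\<^sub>v e j)"
    by (rule mult_mat_vec_lin_comb[OF P ec])
  also have "\<dots> = lin_comb n n (\<lambda>j. cinner (e j) x) (\<lambda>j. complex_of_real (s j) \<cdot>\<^sub>v e j)"
    by (rule lin_comb_cong) (simp_all add: orthonormal_eigenvectorsD(3)[OF ev])
  also have "\<dots> = lin_comb n n (\<lambda>j. cinner (e j) x * complex_of_real (s j)) e"
    by (rule lin_comb_smult_vecs[OF ec])
  finally have "cinner x (P *\<^sub>v x) = (\<Sum>j<n. cinner (e j) x * complex_of_real (s j) * cinner x (e j))"
    using x ec by (simp add: cinner_lin_comb_right)
  also have "\<dots> = (\<Sum>j<n. complex_of_real (s j) * (cnj (cinner (e j) x) * cinner (e j) x))"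
    using ec x by (intro sum.cong) (auto simp: cinner_commute[OF _ x])
  finally show ?thesis by (simp add: cnj_mult_self of_real_sum)
qed

section \<open>The modulus and the singular values\<close>

lemma psd_hermitian: "psd_mat n P \<Longrightarrow> hermitian n P"
  unfolding psd_mat_def by (auto intro: hermitian_if_adjoint_eq)

lemma psd_eigenvalue_nonneg: assumes P: "psd_mat n P" and ev: "orthonormal_eigenvectors n m P v l"
  and j: "j < m"
  shows "l j \<ge> 0"
proof -
  have v: "v j \<in> carrier_vec n" using orthonormal_eigenvectorsD(2)[OF ev j] .
  have "cinner (v j) (P *\<^sub>v v j) = of_real (l j)"
    using orthonormal_eigenvectorsD[OF ev] j v by (simp add: cinner_smult_right[of _ n] orthonormal_cinner)
  thus ?thesis using P v unfolding psd_mat_def by force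
qed

definition spectral_mat :: "nat \<Rightarrow> nat \<Rightarrow> (nat \<Rightarrow> complex vec) \<Rightarrow> (nat \<Rightarrow> real) \<Rightarrow> complex mat" where
  "spectral_mat n m v d = mat n n (\<lambda>(a,b). \<Sum>j<m. of_real (d j) * v j $ a * cnj (v j $ b))"

lemma spectral_mat_carrier [simp]: "spectral_mat n m v d \<in> carrier_mat n n"
  "dim_row (spectral_mat n m v d) = n" "dim_col (spectral_mat n m v d) = n"
  unfolding spectral_mat_def by simp_all

lemma mult_spectral_mat: assumes vc: "\<forall>j<m. v j \<in> carrier_vec n" and x: "x \<in> carrier_vec n"
  shows "spectral_mat n m v d *\<^sub>v x = lin_comb n m (\<lambda>j. of_real (d j) * cinner (v j) x) v"
proof (rule eq_vecI)
  fix a assume "a < dim_vec (lin_comb n m (\<lambda>j. of_real (d j) * cinner (v j) x) v)"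
  hence a: "a < n" by simp
  have "(spectral_mat n m v d *\<^sub>v x) $ a =
      (\<Sum>b<n. \<Sum>j<m. of_real (d j) * v j $ a * (cnj (v j $ b) * x $ b))"
    using a x by (auto simp: spectral_mat_def scalar_prod_def lessThan_atLeast0 sum_distrib_right
        mult.assoc intro!: sum.cong)
  also have "\<dots> = (\<Sum>j<m. of_real (d j) * cinner (v j) x * v j $ a)"
    using vc x by (subst sum.swap) (auto simp: cinner_eq_sum[of _ n] sum_distrib_left
        mult.commute mult.left_commute intro!: sum.cong)
  finally show "(spectral_mat n m v d *\<^sub>v x) $ a = lin_comb n m (\<lambda>j. of_real (d j) * cinner (v j) x) v $ a"
    using a by (simp add: index_lin_comb)
qed (use x in simp)

lemma mult_spectral_mat_carrier [simp]: "x \<in> carrier_vec n \<Longrightarrow> spectral_mat n m v d *\<^sub>v x \<in> carrier_vec n"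
  by (rule mult_mat_vec_carrier[OF spectral_mat_carrier(1)])

lemma adjoint_spectral_mat: "adj (spectral_mat n m v d) = spectral_mat n m v d"
  using mat_adjoint_carrier[OF spectral_mat_carrier(1), of n m v d]
  by (intro eq_matI) (auto simp: index_mat_adjoint[of _ n n] spectral_mat_def mult.commute
      mult.left_commute)

lemma spectral_mat_hermitian: "hermitian n (spectral_mat n m v d)"
  by (rule hermitian_if_adjoint_eq) (simp_all add: adjoint_spectral_mat)

lemma spectral_mat_eigenvectors: assumes o: "orthonormal n m v"
  shows "orthonormal_eigenvectors n m (spectral_mat n m v d) v d"
  unfolding orthonormal_eigenvectors_def
proof (intro conjI allI impI o)
  fix i assume i: "i < m"
  have vc: "\<forall>j<m. v j \<in> carrier_vec n" using o by (simp add: orthonormal_carrier)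
  have "spectral_mat n m v d *\<^sub>v v i = lin_comb n m (\<lambda>j. of_real (d j) * cinner (v j) (v i)) v"
    using mult_spectral_mat[OF vc] vc i by simp
  also have "\<dots> = lin_comb n m (\<lambda>j. if j = i then of_real (d i) else 0) v"
    by (rule lin_comb_cong) (use o i in \<open>auto simp: orthonormal_cinner\<close>)
  finally show "spectral_mat n m v d *\<^sub>v v i = of_real (d i) \<cdot>\<^sub>v v i" using lin_comb_delta i vc by simp
qed

lemma spectral_mat_psd: assumes vc: "\<forall>j<m. v j \<in> carrier_vec n" and d: "\<forall>j<m. d j \<ge> 0"
  shows "psd_mat n (spectral_mat n m v d)"
  unfolding psd_mat_def
proof (intro conjI ballI spectral_mat_carrier adjoint_spectral_mat)
  fix x :: "complex vec" assume x: "x \<in> carrier_vec n"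
  have "cinner x (v j) = cnj (cinner (v j) x)" if "j < m" for j
    using x vc that by (simp add: cinner_commute[OF _ x])
  hence "cinner x (spectral_mat n m v d *\<^sub>v x) =
      (\<Sum>j<m. of_real (d j) * (cnj (cinner (v j) x) * cinner (v j) x))"
    using mult_spectral_mat[OF vc x] x vc by (simp add: cinner_lin_comb_right mult.commute mult.left_commute)
  also have "\<dots> = of_real (\<Sum>j<m. d j * (cmod (cinner (v j) x))\<^sup>2)"
    by (simp add: cnj_mult_self of_real_sum)
  finally have eq: "cinner x (spectral_mat n m v d *\<^sub>v x) = of_real (\<Sum>j<m. d j * (cmod (cinner (v j) x))\<^sup>2)" .
  show "Im (cinner x (spectral_mat n m v d *\<^sub>v x)) = 0" unfolding eq by simp
  show "Re (cinner x (spectral_mat n m v d *\<^sub>v x)) \<ge> 0" unfolding eq using d by (auto intro!: sum_nonneg)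
qed

lemma psd_sqrt_exists: assumes X: "X \<in> carrier_mat n n"
  shows "\<exists>P. psd_mat n P \<and> P * P = adj X * X"
proof -
  let ?M = "adj X * X"
  have Mc: "?M \<in> carrier_mat n n" using X mat_adjoint_carrier[OF X] by simp
  obtain v \<mu> where ev: "orthonormal_eigenvectors n n ?M v \<mu>"
    using hermitian_eigenbasis_exists[OF hermitian_adjoint_self_mult[OF X]] by auto
  note o = orthonormal_eigenvectorsD(1)[OF ev] and vc = orthonormal_eigenvectorsD(2)[OF ev]
  have \<mu>0: "\<mu> j \<ge> 0" if j: "j < n" for j
  proof -
    have "of_real (\<mu> j) = cinner (v j) (?M *\<^sub>v v j)"
      using orthonormal_eigenvectorsD(3)[OF ev j] j vc[OF j] o
      by (simp add: cinner_smult_right[of _ n] orthonormal_cinner)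
    also have "\<dots> = cinner (X *\<^sub>v v j) (X *\<^sub>v v j)" using cinner_adjoint_self_mult[OF X vc[OF j] vc[OF j]] .
    finally show ?thesis using Re_cinner_self_nonneg[of "X *\<^sub>v v j" n] X vc[OF j]
      by (metis Re_complex_of_real mult_mat_vec_carrier)
  qed
  let ?P = "spectral_mat n n v (\<lambda>j. sqrt (\<mu> j))"
  have evP: "orthonormal_eigenvectors n n ?P v (\<lambda>j. sqrt (\<mu> j))" by (rule spectral_mat_eigenvectors[OF o])
  have "?P * ?P = ?M"
  proof (rule mat_eq_on_orthonormal_basis[OF _ Mc o])
    fix j assume j: "j < n"
    have "(?P * ?P) *\<^sub>v v j = ?P *\<^sub>v (?P *\<^sub>v v j)" using vc[OF j]
      by (simp add: assoc_mult_mat_vec[of _ n n _ n])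
    also have "\<dots> = of_real (\<mu> j) \<cdot>\<^sub>v v j"
      using orthonormal_eigenvectorsD(3)[OF evP j] vc[OF j] \<mu>0[OF j]
      by (simp add: mult_mat_vec[of _ n n] smult_smult_assoc flip: of_real_mult)
    also have "\<dots> = ?M *\<^sub>v v j" using orthonormal_eigenvectorsD(3)[OF ev j] by simp
    finally show "(?P * ?P) *\<^sub>v v j = ?M *\<^sub>v v j" .
  qed (simp add: mult_carrier_mat[of _ n n])
  moreover have "psd_mat n ?P" by (rule spectral_mat_psd) (simp_all add: \<mu>0 vc)
  ultimately show ?thesis by blast
qed

text \<open>Expanding in an eigenbasis \<open>r\<close> of \<open>R\<close>, the coefficient \<open>\<langle>r l, v\<rangle>\<close> can be nonzero
  only when \<open>q l\<^sup>2 = p\<^sup>2\<close>, i.e. \<open>q l = p\<close>.\<close>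

lemma psd_sqrt_eigenvector: assumes P: "psd_mat n P" and R: "psd_mat n R" and PR: "P * P = R * R"
  and v: "v \<in> carrier_vec n" and p: "p \<ge> 0" and Pv: "P *\<^sub>v v = complex_of_real p \<cdot>\<^sub>v v"
  shows "R *\<^sub>v v = P *\<^sub>v v"
proof -
  have hR: "hermitian n R" using R by (rule psd_hermitian)
  have Pc: "P \<in> carrier_mat n n" and Rc: "R \<in> carrier_mat n n" using P R unfolding psd_mat_def by auto
  obtain r q where evR: "orthonormal_eigenvectors n n R r q"
    using hermitian_eigenbasis_exists[OF hR] by auto
  note or = orthonormal_eigenvectorsD(1)[OF evR]
  show ?thesis
  proof (rule orthonormal_basis_eqI[OF or])
    fix l assume l: "l < n"
    note rl = orthonormal_eigenvectorsD(2)[OF evR l] and Rr = orthonormal_eigenvectorsD(3)[OF evR l]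
    have q0: "q l \<ge> 0" by (rule psd_eigenvalue_nonneg[OF R evR l])
    have "of_real (q l * q l) * cinner (r l) v = cinner (r l) ((R * R) *\<^sub>v v)"
      using cinner_eigenvector_hermitian[OF hR rl Rr] Rc v by (simp add: assoc_mult_mat_vec[of _ n n _ n])
    also have "\<dots> = of_real (p * p) * cinner (r l) v"
      using PR[symmetric] Pc v Pv rl
      by (simp add: assoc_mult_mat_vec[of _ n n _ n] mult_mat_vec[of _ n n] smult_smult_assoc
          cinner_smult_right[of _ n])
    finally have "cinner (r l) v = 0 \<or> q l * q l = p * p" by (simp flip: of_real_mult)
    hence "cinner (r l) v = 0 \<or> q l = p" using power2_eq_iff_nonneg[OF q0 p] by (simp add: power2_eq_square)
    hence "of_real (q l) * cinner (r l) v = of_real p * cinner (r l) v" by auto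
    thus "cinner (r l) (R *\<^sub>v v) = cinner (r l) (P *\<^sub>v v)"
      using cinner_eigenvector_hermitian[OF hR rl Rr v] Pv rl v by (simp add: cinner_smult_right[of _ n])
  qed (use Rc Pc v in auto)
qed

lemma psd_sqrt_unique: assumes P: "psd_mat n P" and R: "psd_mat n R" and PR: "P * P = R * R"
  shows "P = R"
proof -
  obtain v p where evP: "orthonormal_eigenvectors n n P v p"
    using hermitian_eigenbasis_exists[OF psd_hermitian[OF P]] by auto
  have "R *\<^sub>v v j = P *\<^sub>v v j" if j: "j < n" for j
    by (rule psd_sqrt_eigenvector[OF P R PR orthonormal_eigenvectorsD(2)[OF evP j]
          psd_eigenvalue_nonneg[OF P evP j] orthonormal_eigenvectorsD(3)[OF evP j]])
  thus ?thesis using mat_eq_on_orthonormal_basis[OF _ _ orthonormal_eigenvectorsD(1)[OF evP]] P R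
    unfolding psd_mat_def by metis
qed

lemma mat_abs: assumes X: "X \<in> carrier_mat n n"
  shows mat_abs_psd: "psd_mat n (mat_abs X)" and mat_abs_square: "mat_abs X * mat_abs X = adj X * X"
proof -
  have "\<exists>!P. psd_mat (dim_col X) P \<and> P * P = adj X * X"
    using psd_sqrt_exists[OF X] psd_sqrt_unique X by auto
  hence "psd_mat (dim_col X) (mat_abs X) \<and> mat_abs X * mat_abs X = adj X * X"
    unfolding mat_abs_def by (rule theI')
  thus "psd_mat n (mat_abs X)" "mat_abs X * mat_abs X = adj X * X" using X by auto
qed

lemma mat_abs_carrier: "X \<in> carrier_mat n n \<Longrightarrow> mat_abs X \<in> carrier_mat n n"
  using mat_abs_psd unfolding psd_mat_def by blast

lemma char_poly_eigenbasis: assumes Hc: "H \<in> carrier_mat n n"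
  and ev: "orthonormal_eigenvectors n n H v lam"
  shows "char_poly H = (\<Prod>a\<leftarrow>map (\<lambda>j. complex_of_real (lam j)) [0..<n]. [:- a, 1:])"
proof -
  let ?Q = "basis_mat n v"
  note o = orthonormal_eigenvectorsD(1)[OF ev] and vc = orthonormal_eigenvectorsD(2)[OF ev]
  define D where "D = mat n n (\<lambda>(i,j). if i = j then complex_of_real (lam i) else 0)"
  have Dc: "D \<in> carrier_mat n n" unfolding D_def by simp
  have aQ: "adj ?Q \<in> carrier_mat n n" by (rule mat_adjoint_carrier) simp
  have "H * ?Q = ?Q * D"
  proof (rule eq_matI)
    fix a j assume "a < dim_row (?Q * D)" and "j < dim_col (?Q * D)"
    hence a: "a < n" and j: "j < n" using Dc by auto
    have "(H * ?Q) $$ (a,j) = (H *\<^sub>v v j) $ a" using a j Hc vc by (simp add: col_basis_mat)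
    also have "\<dots> = lam j * v j $ a"
      using a vc[OF j] orthonormal_eigenvectorsD(3)[OF ev j] by simp
    also have "\<dots> = (\<Sum>b<n. if b = j then v b $ a * lam b else 0)" using j by (simp add: mult.commute)
    also have "\<dots> = (\<Sum>b<n. v b $ a * (if b = j then lam b else 0))" by (rule sum.cong) auto
    also have "\<dots> = (?Q * D) $$ (a,j)"
      using a j Dc by (auto simp: D_def basis_mat_def scalar_prod_def lessThan_atLeast0 intro!: sum.cong)
    finally show "(H * ?Q) $$ (a,j) = (?Q * D) $$ (a,j)" .
  qed (use Hc Dc in auto)
  hence "H = ?Q * D * adj ?Q"
    using basis_mat_unitary[OF o] Hc aQ by (metis assoc_mult_mat basis_mat_carrier(1) right_mult_one_mat)
  hence "similar_mat_wit H D ?Q (adj ?Q)"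
    unfolding similar_mat_wit_def Let_def using Hc Dc aQ basis_mat_unitary[OF o] by auto
  hence "char_poly H = char_poly D" by (intro char_poly_similar) (auto simp: similar_mat_def)
  also have "char_poly D = (\<Prod>a\<leftarrow>diag_mat D. [:- a, 1:])"
    by (rule char_poly_upper_triangular[OF Dc]) (auto simp: upper_triangular_def D_def)
  also have "diag_mat D = map (\<lambda>j. complex_of_real (lam j)) [0..<n]" unfolding diag_mat_def D_def by auto
  finally show ?thesis .
qed

lemma proots_prod_linear: "proots (\<Prod>a\<leftarrow>xs. [:- a, 1:]) = mset (xs :: complex list)"
proof (induction xs)
  case (Cons x xs)
  have "(\<Prod>a\<leftarrow>xs. [:- a, 1:]) \<noteq> 0" by (auto simp: prod_list_zero_iff)
  hence "proots ([:- x, 1:] * (\<Prod>a\<leftarrow>xs. [:- a, 1:])) = proots [:- x, 1:] + proots (\<Prod>a\<leftarrow>xs. [:- a, 1:])"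
    by (intro proots_mult) auto
  moreover have "proots [:- x, 1:] = {#x#}" by (metis proots_linear_factor minus_minus)
  ultimately show ?case using Cons by simp
qed simp

lemma sing_val_eigenbasis: assumes X: "X \<in> carrier_mat n n"
  and ev: "orthonormal_eigenvectors n n (mat_abs X) e s" and s: "antimono_on {..<n} s"
  and j: "1 \<le> j" "j \<le> n"
  shows "sing_val X j = s (j - 1)"
proof -
  have "image_mset Re (proots (char_poly (mat_abs X))) = mset (map s [0..<n])"
    unfolding char_poly_eigenbasis[OF mat_abs_carrier[OF X] ev] proots_prod_linear
    by (simp add: mset_map[symmetric] o_def del: mset_map)
  hence "singular_values X = rev (sort (map s [0..<n]))"
    by (simp only: singular_values_def sorted_list_of_multiset_mset)
  also have "sort (map s [0..<n]) = rev (map s [0..<n])"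
    by (rule properties_for_sort)
      (auto simp: sorted_iff_nth_mono rev_nth intro!: antimono_on_lessThanD[OF s])
  finally show ?thesis unfolding sing_val_def using j by simp
qed

lemma ky_fan_norm_eigenbasis: assumes X: "X \<in> carrier_mat n n"
  and ev: "orthonormal_eigenvectors n n (mat_abs X) e s" and s: "antimono_on {..<n} s"
  and kn: "k \<le> n"
  shows "ky_fan_norm k X = (\<Sum>j<k. s j)"
proof -
  have "ky_fan_norm k X = (\<Sum>j<k. sing_val X (Suc j))"
    unfolding ky_fan_norm_def by (simp add: sum.atLeast1_atMost_eq)
  also have "\<dots> = (\<Sum>j<k. s j)"
    using kn by (intro sum.cong) (simp_all add: sing_val_eigenbasis[OF X ev s])
  finally show ?thesis .
qed

lemma ky_fan_norm_eq_sum_sing_val: "ky_fan_norm k X = (\<Sum>i<k. sing_val X (Suc i))"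
  unfolding ky_fan_norm_def by (simp add: sum.atLeast1_atMost_eq)

lemma abs_eigenbasis_exists: assumes X: "X \<in> carrier_mat n n"
  shows "\<exists>e s. orthonormal_eigenvectors n n (mat_abs X) e s \<and> antimono_on {..<n} s \<and> (\<forall>j<n. 0 \<le> s j)"
  using hermitian_sorted_eigenbasis_exists[OF psd_hermitian[OF mat_abs_psd[OF X]]]
    psd_eigenvalue_nonneg[OF mat_abs_psd[OF X]] by blast

lemma cinner_mult_abs_eigenvectors: assumes X: "X \<in> carrier_mat n n"
  and ev: "orthonormal_eigenvectors n n (mat_abs X) e s" and i: "i < n" and j: "j < n"
  shows "cinner (X *\<^sub>v e i) (X *\<^sub>v e j) = (if i = j then of_real (s j * s j) else 0)"
proof -
  let ?P = "mat_abs X"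
  note ec = orthonormal_eigenvectorsD(2)[OF ev]
  have "(?P * ?P) *\<^sub>v e j = ?P *\<^sub>v (?P *\<^sub>v e j)"
    by (rule assoc_mult_mat_vec) (use mat_abs_carrier[OF X] ec[OF j] in auto)
  hence "cinner (X *\<^sub>v e i) (X *\<^sub>v e j) = cinner (e i) (?P *\<^sub>v (?P *\<^sub>v e j))"
    using cinner_adjoint_self_mult[OF X ec[OF i] ec[OF j]] mat_abs_square[OF X] by simp
  also have "?P *\<^sub>v (?P *\<^sub>v e j) = of_real (s j * s j) \<cdot>\<^sub>v e j"
    using orthonormal_eigenvectorsD(3)[OF ev j] mat_abs_carrier[OF X] ec[OF j]
    by (simp add: mult_mat_vec[of _ n n] smult_smult_assoc)
  finally show ?thesis using ec[OF i] ec[OF j] orthonormal_eigenvectorsD(1)[OF ev] i j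
    by (simp add: cinner_smult_right[of _ n] orthonormal_cinner)
qed

lemma antimono_nonneg_positive_prefix: fixes s :: "nat \<Rightarrow> real"
  assumes "antimono_on {..<n} s" and "\<forall>j<n. 0 \<le> s j"
  shows "\<exists>r\<le>n. (\<forall>j<r. 0 < s j) \<and> (\<forall>j. r \<le> j \<longrightarrow> j < n \<longrightarrow> s j = 0)"
  using assms
proof (induction n)
  case (Suc n)
  have "antimono_on {..<n} s" using Suc.prems(1) by (rule monotone_on_subset) auto
  then obtain r where r: "r \<le> n" "\<forall>j<r. 0 < s j" "\<forall>j. r \<le> j \<longrightarrow> j < n \<longrightarrow> s j = 0"
    using Suc by auto
  show ?case
  proof (cases "s n > 0")
    case True
    hence "\<forall>j<Suc n. 0 < s j" using antimono_on_lessThanD[OF Suc.prems(1)] by (meson less_Suc_eq_le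
          less_le_trans lessI)
    thus ?thesis by auto
  next
    case False
    thus ?thesis using r Suc.prems(2) by (intro exI[of _ r]) (auto simp: less_Suc_eq)
  qed
qed simp

text \<open>The left singular vectors are \<open>X e j / s j\<close> for the nonzero \<open>s j\<close>, completed to an
  orthonormal basis.\<close>

lemma left_singular_basis_exists: assumes X: "X \<in> carrier_mat n n"
  and ev: "orthonormal_eigenvectors n n (mat_abs X) e s" and s: "antimono_on {..<n} s"
  and s0: "\<forall>j<n. 0 \<le> s j"
  shows "\<exists>w. orthonormal n n w \<and> (\<forall>j<n. X *\<^sub>v e j = complex_of_real (s j) \<cdot>\<^sub>v w j)"
proof -
  note ec = orthonormal_eigenvectorsD(2)[OF ev] and XX = cinner_mult_abs_eigenvectors[OF X ev]
  obtain r where rn: "r \<le> n" and rpos: "\<forall>j<r. 0 < s j" and rz: "\<forall>j. r \<le> j \<longrightarrow> j < n \<longrightarrow> s j = 0"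
    using antimono_nonneg_positive_prefix[OF s s0] by blast
  define w0 where "w0 = (\<lambda>j. complex_of_real (1 / s j) \<cdot>\<^sub>v (X *\<^sub>v e j))"
  have "orthonormal n r w0"
    unfolding orthonormal_def
  proof (intro conjI allI impI)
    fix i j assume i: "i < r" and j: "j < r"
    have "cinner (w0 i) (w0 j) = of_real (1 / s i) * of_real (1 / s j) * cinner (X *\<^sub>v e i) (X *\<^sub>v e j)"
      unfolding w0_def using X ec i j rn
      by (simp add: cinner_smult_left[of _ n] cinner_smult_right[of _ n])
    also have "\<dots> = (if i = j then of_real ((1 / s j) * (1 / s j) * (s j * s j)) else 0)"
      using XX i j rn by simp
    also have "(1 / s j) * (1 / s j) * (s j * s j) = 1" using rpos j by force
    finally show "cinner (w0 i) (w0 j) = (if i = j then 1 else 0)" by simp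
  qed (use X ec rn w0_def in auto)
  then obtain w where ow: "orthonormal n n w" and ww: "\<forall>i<r. w i = w0 i"
    using orthonormal_extend_basis rn by blast
  have "X *\<^sub>v e j = complex_of_real (s j) \<cdot>\<^sub>v w j" if j: "j < n" for j
  proof (cases "j < r")
    case True
    have "complex_of_real (s j) \<cdot>\<^sub>v w j = (of_real (s j) * of_real (1 / s j)) \<cdot>\<^sub>v (X *\<^sub>v e j)"
      using ww True unfolding w0_def by (simp add: smult_smult_assoc)
    moreover have "s j > 0" using rpos True by blast
    ultimately show ?thesis using X ec[OF j] by (simp flip: of_real_mult)
  next
    case False
    hence "s j = 0" using rz j by simp
    moreover have "X *\<^sub>v e j = 0\<^sub>v n"
      using cinner_self_eq_zero[of "X *\<^sub>v e j" n] XX[OF j j] X ec[OF j] \<open>s j = 0\<close> by simp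
    ultimately show ?thesis using orthonormal_carrier[OF ow j] by auto
  qed
  thus ?thesis using ow by blast
qed

lemma svd_exists: assumes X: "X \<in> carrier_mat n n"
  shows "\<exists>e s w. orthonormal_eigenvectors n n (mat_abs X) e s \<and> antimono_on {..<n} s \<and>
    (\<forall>j<n. 0 \<le> s j) \<and> orthonormal n n w \<and> (\<forall>j<n. X *\<^sub>v e j = complex_of_real (s j) \<cdot>\<^sub>v w j)"
proof -
  obtain e s where "orthonormal_eigenvectors n n (mat_abs X) e s" "antimono_on {..<n} s" "\<forall>j<n. 0 \<le> s j"
    using abs_eigenbasis_exists[OF X] by blast
  with left_singular_basis_exists[OF X this] show ?thesis by blast
qed

section \<open>The Ky Fan norm as a maximum\<close>

lemma top_sum_minus_weighted_sum:
  fixes s g :: "nat \<Rightarrow> real" assumes kn: "k \<le> n"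
  shows "(\<Sum>j<k. s j) - (\<Sum>j<n. s j * g j) =
     (\<Sum>j<k. (s j - c) * (1 - g j)) + (\<Sum>j\<in>{k..<n}. (c - s j) * g j) + c * (real k - (\<Sum>j<n. g j))"
  unfolding sum_lessThan_split[OF kn, of "\<lambda>j. s j * g j"] sum_lessThan_split[OF kn, of g]
  by (simp add: algebra_simps sum_subtractf sum_distrib_left sum.distrib)

text \<open>For \<open>c = s (k - 1)\<close> all three summands in the identity above are nonnegative.\<close>

lemma weighted_sum_top_sum:
  fixes s g :: "nat \<Rightarrow> real"
  assumes kn: "k \<le> n" and k1: "1 \<le> k"
    and s: "antimono_on {..<n} s" and s0: "\<forall>j<n. s j \<ge> 0"
    and g: "\<forall>j<n. 0 \<le> g j \<and> g j \<le> 1" and gs: "(\<Sum>j<n. g j) \<le> real k"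
  shows weighted_sum_le_top_sum: "(\<Sum>j<n. s j * g j) \<le> (\<Sum>j<k. s j)"
    and weighted_sum_eq_top_sumD: "(\<Sum>j<n. s j * g j) = (\<Sum>j<k. s j) \<Longrightarrow>
         \<forall>j<n. (s j > s (k - 1) \<longrightarrow> g j = 1) \<and> (s j < s (k - 1) \<longrightarrow> g j = 0)"
proof -
  let ?c = "s (k - 1)"
  have t1: "\<forall>j\<in>{..<k}. (s j - ?c) * (1 - g j) \<ge> 0"
    using antimono_on_lessThanD[OF s] g kn k1 by auto
  have t2: "\<forall>j\<in>{k..<n}. (?c - s j) * g j \<ge> 0"
    using antimono_on_lessThanD[OF s] g kn k1 by auto
  have t3: "?c * (real k - (\<Sum>j<n. g j)) \<ge> 0" using s0 kn k1 gs by simp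
  have S1: "(\<Sum>j<k. (s j - ?c) * (1 - g j)) \<ge> 0" and S2: "(\<Sum>j\<in>{k..<n}. (?c - s j) * g j) \<ge> 0"
    using t1 t2 by (auto intro: sum_nonneg)
  note id = top_sum_minus_weighted_sum[OF kn, of s g ?c]
  show "(\<Sum>j<n. s j * g j) \<le> (\<Sum>j<k. s j)" using id S1 S2 t3 by linarith
  assume "(\<Sum>j<n. s j * g j) = (\<Sum>j<k. s j)"
  hence "(\<Sum>j<k. (s j - ?c) * (1 - g j)) = 0" "(\<Sum>j\<in>{k..<n}. (?c - s j) * g j) = 0"
    using id S1 S2 t3 by linarith+
  hence e1: "\<forall>j\<in>{..<k}. (s j - ?c) * (1 - g j) = 0" and e2: "\<forall>j\<in>{k..<n}. (?c - s j) * g j = 0"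
    using sum_nonneg_eq_0_iff[of "{..<k}" "\<lambda>j. (s j - ?c) * (1 - g j)"]
      sum_nonneg_eq_0_iff[of "{k..<n}" "\<lambda>j. (?c - s j) * g j"] t1 t2 by simp_all
  show "\<forall>j<n. (s j > ?c \<longrightarrow> g j = 1) \<and> (s j < ?c \<longrightarrow> g j = 0)"
  proof (intro allI impI conjI)
    fix j assume j: "j < n" and sj: "s j > ?c"
    hence "j < k" using antimono_on_lessThanD[OF s, of "k - 1" j] by fastforce
    hence "(s j - ?c) * (1 - g j) = 0" using e1 by blast
    thus "g j = 1" using sj by simp
  next
    fix j assume j: "j < n" and sj: "s j < ?c"
    hence "k \<le> j" using antimono_on_lessThanD[OF s, of j "k - 1"] kn k1 by fastforce
    hence "(?c - s j) * g j = 0" using e2 j by simp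
    thus "g j = 0" using sj by simp
  qed
qed

lemma cinner_mult_svd: assumes e: "orthonormal n n e" and w: "\<forall>j<n. w j \<in> carrier_vec n"
  and X: "X \<in> carrier_mat n n" and Xe: "\<forall>j<n. X *\<^sub>v e j = complex_of_real (s j) \<cdot>\<^sub>v w j"
  and x: "x \<in> carrier_vec n" and y: "y \<in> carrier_vec n"
  shows "cinner y (X *\<^sub>v x) = (\<Sum>j<n. of_real (s j) * (cinner (e j) x * cinner y (w j)))"
proof -
  have ec: "\<forall>j<n. e j \<in> carrier_vec n" using e by (simp add: orthonormal_carrier)
  have "X *\<^sub>v x = lin_comb n n (\<lambda>j. cinner (e j) x) (\<lambda>j. X *\<^sub>v e j)"
    using orthonormal_basis_expansion[OF e x] mult_mat_vec_lin_comb[OF X ec] by metis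
  hence "cinner y (X *\<^sub>v x) = (\<Sum>j<n. cinner (e j) x * cinner y (X *\<^sub>v e j))"
    using y X ec by (simp add: cinner_lin_comb_right)
  thus ?thesis using Xe y w by (auto intro!: sum.cong simp: cinner_smult_right[of _ n])
qed

lemma cmod_sum_mult_le: fixes a b :: "'i \<Rightarrow> complex"
  shows "cmod (\<Sum>i\<in>I. a i * b i) \<le> ((\<Sum>i\<in>I. (cmod (a i))\<^sup>2) + (\<Sum>i\<in>I. (cmod (b i))\<^sup>2)) / 2"
proof -
  have "cmod (\<Sum>i\<in>I. a i * b i) \<le> (\<Sum>i\<in>I. cmod (a i) * cmod (b i))"
    unfolding norm_mult[symmetric] by (rule norm_sum)
  also have "\<dots> \<le> (\<Sum>i\<in>I. ((cmod (a i))\<^sup>2 + (cmod (b i))\<^sup>2) / 2)"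
  proof (rule sum_mono)
    fix i
    have "0 \<le> (cmod (a i) - cmod (b i))\<^sup>2" by simp
    thus "cmod (a i) * cmod (b i) \<le> ((cmod (a i))\<^sup>2 + (cmod (b i))\<^sup>2) / 2"
      by (simp add: power2_diff field_simps)
  qed
  also have "\<dots> = ((\<Sum>i\<in>I. (cmod (a i))\<^sup>2) + (\<Sum>i\<in>I. (cmod (b i))\<^sup>2)) / 2"
    by (simp only: sum_divide_distrib[symmetric] sum.distrib)
  finally show ?thesis .
qed

text \<open>Writing \<open>\<Sum>\<^sub>i \<langle>y i, X x i\<rangle> = \<Sum>\<^sub>j s j a j\<close> in a singular value decomposition,
  AM-GM bounds \<open>|a j|\<close> by weights as in the rearrangement inequality.\<close>

lemma cmod_sum_cinner_le_top_sum:
  assumes X: "X \<in> carrier_mat n n" and oe: "orthonormal n n e" and ow: "orthonormal n n w"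
    and Xe: "\<forall>j<n. X *\<^sub>v e j = complex_of_real (s j) \<cdot>\<^sub>v w j"
    and s0: "\<forall>j<n. s j \<ge> 0" and s: "antimono_on {..<n} s"
    and kn: "k \<le> n" and k1: "1 \<le> k"
    and ox: "orthonormal n k x" and oy: "orthonormal n k y"
  shows "cmod (\<Sum>i<k. cinner (y i) (X *\<^sub>v x i)) \<le> (\<Sum>j<k. s j)"
proof -
  have ec: "\<And>j. j < n \<Longrightarrow> e j \<in> carrier_vec n" and wc: "\<And>j. j < n \<Longrightarrow> w j \<in> carrier_vec n"
    using oe ow by (auto simp: orthonormal_carrier)
  define a where "a = (\<lambda>j. \<Sum>i<k. cinner (e j) (x i) * cinner (y i) (w j))"
  define g where "g = (\<lambda>j. ((\<Sum>i<k. (cmod (cinner (x i) (e j)))\<^sup>2) + (\<Sum>i<k. (cmod (cinner (y i) (w j)))\<^sup>2)) / 2)"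
  have "(\<Sum>i<k. cinner (y i) (X *\<^sub>v x i)) =
      (\<Sum>i<k. \<Sum>j<n. of_real (s j) * (cinner (e j) (x i) * cinner (y i) (w j)))"
    using cinner_mult_svd[OF oe _ X Xe] ox oy wc by (intro sum.cong) (auto simp: orthonormal_carrier)
  also have "\<dots> = (\<Sum>j<n. of_real (s j) * a j)"
    unfolding a_def by (subst sum.swap) (simp add: sum_distrib_left)
  finally have "cmod (\<Sum>i<k. cinner (y i) (X *\<^sub>v x i)) \<le> (\<Sum>j<n. s j * cmod (a j))"
    using s0 norm_sum[of "\<lambda>j. of_real (s j) * a j" "{..<n}"] by (simp add: norm_mult)
  also have "\<dots> \<le> (\<Sum>j<n. s j * g j)"
  proof (intro sum_mono mult_left_mono)
    fix j assume j: "j \<in> {..<n}"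
    have "cmod (a j) \<le> ((\<Sum>i<k. (cmod (cinner (e j) (x i)))\<^sup>2) + (\<Sum>i<k. (cmod (cinner (y i) (w j)))\<^sup>2)) / 2"
      unfolding a_def by (rule cmod_sum_mult_le)
    also have "\<dots> = g j"
      using ec j ox unfolding g_def by (simp add: cmod_cinner_commute[of _ n] orthonormal_carrier)
    finally show "cmod (a j) \<le> g j" .
  qed (use s0 in auto)
  also have "\<dots> \<le> (\<Sum>j<k. s j)"
  proof (rule weighted_sum_le_top_sum[OF kn k1 s s0])
    show "\<forall>j<n. 0 \<le> g j \<and> g j \<le> 1"
    proof (intro allI impI conjI)
      fix j assume j: "j < n"
      have "(\<Sum>i<k. (cmod (cinner (x i) (e j)))\<^sup>2) \<le> 1" "(\<Sum>i<k. (cmod (cinner (y i) (w j)))\<^sup>2) \<le> 1"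
        using sum_cmod_cinner_sq_le_one[OF ox ec[OF j]] sum_cmod_cinner_sq_le_one[OF oy wc[OF j]] oe ow j
        by (simp_all add: orthonormal_cinner)
      thus "g j \<le> 1" unfolding g_def by simp
      show "0 \<le> g j" unfolding g_def by (simp add: sum_nonneg)
    qed
    show "(\<Sum>j<n. g j) \<le> real k"
      using sum_sum_cmod_cinner_sq[OF oe ox] sum_sum_cmod_cinner_sq[OF ow oy]
      unfolding g_def by (simp add: sum.distrib flip: sum_divide_distrib)
  qed
  finally show ?thesis .
qed

lemma cmod_sum_cinner_le_ky_fan_norm: assumes X: "X \<in> carrier_mat n n"
  and kn: "k \<le> n" and k1: "1 \<le> k" and ox: "orthonormal n k x" and oy: "orthonormal n k y"
  shows "cmod (\<Sum>i<k. cinner (y i) (X *\<^sub>v x i)) \<le> ky_fan_norm k X"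
proof -
  obtain e s w where ev: "orthonormal_eigenvectors n n (mat_abs X) e s" and s: "antimono_on {..<n} s"
    and s0: "\<forall>j<n. 0 \<le> s j" and ow: "orthonormal n n w" and Xe: "\<forall>j<n. X *\<^sub>v e j = of_real (s j) \<cdot>\<^sub>v w j"
    using svd_exists[OF X] by blast
  show ?thesis unfolding ky_fan_norm_eigenbasis[OF X ev s kn]
    by (rule cmod_sum_cinner_le_top_sum[OF X orthonormal_eigenvectorsD(1)[OF ev] ow Xe s0 s kn k1 ox oy])
qed

lemma ky_fan_norm_attained: assumes X: "X \<in> carrier_mat n n" and kn: "k \<le> n"
  shows "\<exists>x y. orthonormal n k x \<and> orthonormal n k y \<and>
     (\<Sum>i<k. cinner (y i) (X *\<^sub>v x i)) = complex_of_real (ky_fan_norm k X)"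
proof -
  obtain e s w where ev: "orthonormal_eigenvectors n n (mat_abs X) e s" and s: "antimono_on {..<n} s"
    and ow: "orthonormal n n w" and Xe: "\<forall>j<n. X *\<^sub>v e j = of_real (s j) \<cdot>\<^sub>v w j"
    using svd_exists[OF X] by blast
  have "(\<Sum>i<k. cinner (w i) (X *\<^sub>v e i)) = complex_of_real (\<Sum>i<k. s i)"
    using Xe ow kn by (auto intro!: sum.cong simp: cinner_smult_right[of _ n] orthonormal_cinner
        orthonormal_carrier)
  thus ?thesis unfolding ky_fan_norm_eigenbasis[OF X ev s kn]
    using orthonormal_mono[OF orthonormal_eigenvectorsD(1)[OF ev] kn] orthonormal_mono[OF ow kn] by blast
qed

lemma ky_fan_norm_nonneg: assumes X: "X \<in> carrier_mat n n" and kn: "k \<le> n"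
  shows "ky_fan_norm k X \<ge> 0"
proof -
  obtain e s where ev: "orthonormal_eigenvectors n n (mat_abs X) e s" and s: "antimono_on {..<n} s"
    and s0: "\<forall>j<n. 0 \<le> s j"
    using abs_eigenbasis_exists[OF X] by blast
  show ?thesis unfolding ky_fan_norm_eigenbasis[OF X ev s kn] using s0 kn by (auto intro!: sum_nonneg)
qed

lemma smult_mat_mult_vec: assumes B: "B \<in> carrier_mat n n" and x: "x \<in> carrier_vec n"
  shows "(c \<cdot>\<^sub>m B) *\<^sub>v x = c \<cdot>\<^sub>v (B *\<^sub>v x)"
  using B x by (intro eq_vecI) (auto simp: scalar_prod_def sum_distrib_left mult.assoc intro!: sum.cong)

lemma sum_cinner_add_smult: assumes A: "A \<in> carrier_mat n n" and B: "B \<in> carrier_mat n n"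
  and ox: "orthonormal n k x" and oy: "orthonormal n k y"
  shows "(\<Sum>i<k. cinner (y i) ((A + c \<cdot>\<^sub>m B) *\<^sub>v x i)) =
    (\<Sum>i<k. cinner (y i) (A *\<^sub>v x i)) + c * (\<Sum>i<k. cinner (y i) (B *\<^sub>v x i))"
proof -
  have "cinner (y i) ((A + c \<cdot>\<^sub>m B) *\<^sub>v x i) = cinner (y i) (A *\<^sub>v x i) + c * cinner (y i) (B *\<^sub>v x i)"
    if i: "i < k" for i
  proof -
    have xi: "x i \<in> carrier_vec n" and yi: "y i \<in> carrier_vec n"
      using ox oy i by (auto simp: orthonormal_carrier)
    have "(A + c \<cdot>\<^sub>m B) *\<^sub>v x i = A *\<^sub>v x i + c \<cdot>\<^sub>v (B *\<^sub>v x i)"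
      using add_mult_distrib_mat_vec[OF A _ xi, of "c \<cdot>\<^sub>m B"] B xi by (simp add: smult_mat_mult_vec)
    thus ?thesis using A B xi yi by (simp add: cinner_add_right[of _ n] cinner_smult_right[of _ n])
  qed
  thus ?thesis by (simp add: sum.distrib sum_distrib_left)
qed

lemma ky_fan_norm_add_smult_le: assumes A: "A \<in> carrier_mat n n" and B: "B \<in> carrier_mat n n"
  and kn: "k \<le> n" and k1: "1 \<le> k" and c: "cmod c = 1"
  shows "ky_fan_norm k (A + c \<cdot>\<^sub>m B) \<le> ky_fan_norm k A + ky_fan_norm k B"
proof -
  have X: "A + c \<cdot>\<^sub>m B \<in> carrier_mat n n" using A B by simp
  obtain x y where ox: "orthonormal n k x" and oy: "orthonormal n k y"
    and eq: "(\<Sum>i<k. cinner (y i) ((A + c \<cdot>\<^sub>m B) *\<^sub>v x i)) = complex_of_real (ky_fan_norm k (A + c \<cdot>\<^sub>m B))"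
    using ky_fan_norm_attained[OF X kn] by blast
  have "ky_fan_norm k (A + c \<cdot>\<^sub>m B) = cmod (\<Sum>i<k. cinner (y i) ((A + c \<cdot>\<^sub>m B) *\<^sub>v x i))"
    using eq ky_fan_norm_nonneg[OF X kn] by simp
  also have "\<dots> \<le> cmod (\<Sum>i<k. cinner (y i) (A *\<^sub>v x i)) + cmod (\<Sum>i<k. cinner (y i) (B *\<^sub>v x i))"
    unfolding sum_cinner_add_smult[OF A B ox oy] using c
      norm_triangle_ineq[of "\<Sum>i<k. cinner (y i) (A *\<^sub>v x i)" "c * (\<Sum>i<k. cinner (y i) (B *\<^sub>v x i))"]
    by (simp add: norm_mult)
  also have "\<dots> \<le> ky_fan_norm k A + ky_fan_norm k B"
    using cmod_sum_cinner_le_ky_fan_norm[OF _ kn k1 ox oy] A B by (simp add: add_mono)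
  finally show ?thesis .
qed

section \<open>Families attaining the maximum\<close>

lemma complex_add_eq_of_real_bounds:
  fixes z1 z2 :: complex and r1 r2 :: real
  assumes eq: "z1 + z2 = of_real (r1 + r2)" and b1: "cmod z1 \<le> r1" and b2: "cmod z2 \<le> r2"
  shows "z1 = of_real r1" "z2 = of_real r2"
proof -
  have "Re z1 + Re z2 = r1 + r2" using arg_cong[OF eq, of Re] by simp
  moreover have "Re z1 \<le> cmod z1" "Re z2 \<le> cmod z2" by (rule complex_Re_le_cmod)+
  ultimately have "Re z1 = r1" "Re z2 = r2" "cmod z1 = Re z1" "cmod z2 = Re z2" using b1 b2 by linarith+
  hence "Im z1 = 0" "Im z2 = 0" using cmod_power2[of z1] cmod_power2[of z2] by simp_all
  thus "z1 = of_real r1" "z2 = of_real r2" using \<open>Re z1 = r1\<close> \<open>Re z2 = r2\<close>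
    by (simp_all add: complex_eq_iff)
qed

text \<open>The weights \<open>\<Sum>\<^sub>i |\<langle>q i, e j\<rangle>|\<^sup>2\<close> are extremal in the rearrangement inequality,
  hence \<open>1\<close> above the threshold \<open>s (k - 1)\<close> and \<open>0\<close> below it.\<close>

lemma top_sum_attained_eigenvectors:
  assumes P: "P \<in> carrier_mat n n" and ev: "orthonormal_eigenvectors n n P e s"
    and s: "antimono_on {..<n} s" and s0: "\<forall>j<n. s j \<ge> 0"
    and kn: "k \<le> n" and k1: "1 \<le> k" and oq: "orthonormal n k q"
    and eq: "(\<Sum>i<k. cinner (q i) (P *\<^sub>v q i)) = of_real (\<Sum>j<k. s j)"
  shows "\<forall>j<n. (s j < s (k - 1) \<longrightarrow> (\<forall>i<k. cinner (q i) (e j) = 0)) \<and>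
               (s j > s (k - 1) \<longrightarrow> e j = lin_comb n k (\<lambda>i. cinner (q i) (e j)) q)"
proof -
  note oe = orthonormal_eigenvectorsD(1)[OF ev] and ec = orthonormal_eigenvectorsD(2)[OF ev]
  have qc: "\<And>i. i < k \<Longrightarrow> q i \<in> carrier_vec n" using oq by (simp add: orthonormal_carrier)
  define bet where "bet = (\<lambda>j. \<Sum>i<k. (cmod (cinner (q i) (e j)))\<^sup>2)"
  have "(\<Sum>i<k. cinner (q i) (P *\<^sub>v q i)) =
      (\<Sum>i<k. of_real (\<Sum>j<n. s j * (cmod (cinner (q i) (e j)))\<^sup>2))"
    using quadratic_form_eigenbasis[OF P ev] qc ec
    by (auto intro!: sum.cong simp: cmod_cinner_commute[of _ n])
  also have "\<dots> = of_real (\<Sum>j<n. s j * bet j)"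
    unfolding bet_def sum_distrib_left by (subst sum.swap) (simp add: of_real_sum)
  finally have "(\<Sum>j<n. s j * bet j) = (\<Sum>j<k. s j)" using eq by (simp only: of_real_eq_iff)
  moreover have "\<forall>j<n. 0 \<le> bet j \<and> bet j \<le> 1"
    using sum_cmod_cinner_sq_le_one[OF oq ec] oe unfolding bet_def
    by (auto simp: orthonormal_cinner intro: sum_nonneg)
  moreover have "(\<Sum>j<n. bet j) \<le> real k" using sum_sum_cmod_cinner_sq[OF oe oq] unfolding bet_def by simp
  ultimately have R: "\<forall>j<n. (s j > s (k - 1) \<longrightarrow> bet j = 1) \<and> (s j < s (k - 1) \<longrightarrow> bet j = 0)"
    using weighted_sum_eq_top_sumD[OF kn k1 s s0] by blast
  show ?thesis
  proof (intro allI impI conjI)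
    fix j i assume j: "j < n" and "s j < s (k - 1)" and i: "i < k"
    hence "bet j = 0" using R by simp
    thus "cinner (q i) (e j) = 0"
      using sum_nonneg_eq_0_iff[of "{..<k}" "\<lambda>i. (cmod (cinner (q i) (e j)))\<^sup>2"] i
      unfolding bet_def by simp
  next
    fix j assume j: "j < n" and "s j > s (k - 1)"
    hence "bet j = 1" using R by simp
    thus "e j = lin_comb n k (\<lambda>i. cinner (q i) (e j)) q"
      using in_span_if_bessel_eq[OF oq ec[OF j]] oe j unfolding bet_def by (simp add: orthonormal_cinner)
  qed
qed

lemma Re_quadratic_form_diff: assumes H: "hermitian n P"
  and y: "y \<in> carrier_vec n" and q: "q \<in> carrier_vec n"
  shows "Re (cinner (y - q) (P *\<^sub>v (y - q))) =
    Re (cinner y (P *\<^sub>v y)) + Re (cinner q (P *\<^sub>v q)) - 2 * Re (cinner y (P *\<^sub>v q))"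
proof -
  have Pc: "P \<in> carrier_mat n n" using H by (rule hermitian_carrier)
  have Py: "P *\<^sub>v y \<in> carrier_vec n" and Pq: "P *\<^sub>v q \<in> carrier_vec n" using Pc y q by auto
  have "cinner q (P *\<^sub>v y) = cnj (cinner y (P *\<^sub>v q))"
    using hermitian_cinner[OF H q y] cinner_commute[OF y Pq] by simp
  moreover have "cinner (y - q) (P *\<^sub>v (y - q)) = cinner y (P *\<^sub>v y) - cinner y (P *\<^sub>v q)
      - (cinner q (P *\<^sub>v y) - cinner q (P *\<^sub>v q))"
    using mult_minus_distrib_mat_vec[OF Pc y q] y q Py Pq
    by (simp add: cinner_minus_left[of _ n] cinner_minus_right[of _ n])
  ultimately show ?thesis by simp
qed

lemma Re_sum_quadratic_form_le_top_sum:
  assumes P: "P \<in> carrier_mat n n" and ev: "orthonormal_eigenvectors n n P e s"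
    and s: "antimono_on {..<n} s" and s0: "\<forall>j<n. s j \<ge> 0"
    and kn: "k \<le> n" and k1: "1 \<le> k" and ox: "orthonormal n k x"
  shows "Re (\<Sum>i<k. cinner (x i) (P *\<^sub>v x i)) \<le> (\<Sum>j<k. s j)"
proof -
  have "cmod (\<Sum>i<k. cinner (x i) (P *\<^sub>v x i)) \<le> (\<Sum>j<k. s j)"
    by (rule cmod_sum_cinner_le_top_sum[OF P orthonormal_eigenvectorsD(1)[OF ev]
          orthonormal_eigenvectorsD(1)[OF ev] _ s0 s kn k1 ox ox])
      (simp add: orthonormal_eigenvectorsD(3)[OF ev])
  thus ?thesis using complex_Re_le_cmod order_trans by blast
qed

text \<open>Expand \<open>\<langle>y i - q i, P (y i - q i)\<rangle>\<close> and bound both diagonal sums by the maximum.\<close>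

lemma top_sum_attained_pair:
  assumes P: "psd_mat n P" and ev: "orthonormal_eigenvectors n n P e s"
    and s: "antimono_on {..<n} s" and s0: "\<forall>j<n. s j \<ge> 0"
    and kn: "k \<le> n" and k1: "1 \<le> k" and oq: "orthonormal n k q" and oy: "orthonormal n k y"
    and eq: "(\<Sum>i<k. cinner (y i) (P *\<^sub>v q i)) = of_real (\<Sum>j<k. s j)"
  shows "(\<Sum>i<k. cinner (q i) (P *\<^sub>v q i)) = of_real (\<Sum>j<k. s j)"
    and "\<forall>i<k. Re (cinner (y i - q i) (P *\<^sub>v (y i - q i))) = 0"
proof -
  have Pc: "P \<in> carrier_mat n n" using P unfolding psd_mat_def by blast
  have Pnn: "\<And>x. x \<in> carrier_vec n \<Longrightarrow> Im (cinner x (P *\<^sub>v x)) = 0 \<and> Re (cinner x (P *\<^sub>v x)) \<ge> 0"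
    using P unfolding psd_mat_def by blast
  have qc: "\<And>i. i < k \<Longrightarrow> q i \<in> carrier_vec n" and yc: "\<And>i. i < k \<Longrightarrow> y i \<in> carrier_vec n"
    using oq oy by (auto simp: orthonormal_carrier)
  let ?S = "\<Sum>j<k. s j" and ?d = "\<lambda>i. Re (cinner (y i - q i) (P *\<^sub>v (y i - q i)))"
  have "(\<Sum>i<k. ?d i) = Re (\<Sum>i<k. cinner (y i) (P *\<^sub>v y i)) + Re (\<Sum>i<k. cinner (q i) (P *\<^sub>v q i))
      - 2 * Re (\<Sum>i<k. cinner (y i) (P *\<^sub>v q i))"
    using Re_quadratic_form_diff[OF psd_hermitian[OF P] yc qc]
    by (simp add: sum.distrib sum_subtractf sum_distrib_left Re_sum)
  moreover have "Re (\<Sum>i<k. cinner (y i) (P *\<^sub>v y i)) \<le> ?S" "Re (\<Sum>i<k. cinner (q i) (P *\<^sub>v q i)) \<le> ?S"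
    using Re_sum_quadratic_form_le_top_sum[OF Pc ev s s0 kn k1] oy oq by blast+
  moreover have dnn: "\<forall>i\<in>{..<k}. ?d i \<ge> 0" using Pnn qc yc by simp
  moreover have "Re (\<Sum>i<k. cinner (y i) (P *\<^sub>v q i)) = ?S" using arg_cong[OF eq, of Re] by simp
  moreover have "(\<Sum>i<k. ?d i) \<ge> 0" using dnn by (intro sum_nonneg) blast
  ultimately have "(\<Sum>i<k. ?d i) = 0" and qS: "Re (\<Sum>i<k. cinner (q i) (P *\<^sub>v q i)) = ?S"
    by linarith+
  thus "\<forall>i<k. ?d i = 0" using sum_nonneg_eq_0_iff[of "{..<k}" ?d] dnn by simp
  have "Im (\<Sum>i<k. cinner (q i) (P *\<^sub>v q i)) = 0" using Pnn qc by (simp add: Im_sum)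
  thus "(\<Sum>i<k. cinner (q i) (P *\<^sub>v q i)) = of_real ?S" using qS by (simp add: complex_eq_iff)
qed

text \<open>As \<open>s (k - 1) > 0\<close>, \<open>\<langle>d, P d\<rangle> = 0\<close> forces \<open>d \<perp> e j\<close> whenever \<open>s j \<ge> s (k - 1)\<close>,
  while \<open>q i \<perp> e j\<close> whenever \<open>s j < s (k - 1)\<close>; hence \<open>d = y i - q i \<perp> q i\<close>.\<close>

lemma eq_if_sum_cinner_top_sum:
  assumes P: "psd_mat n P" and ev: "orthonormal_eigenvectors n n P e s"
    and s: "antimono_on {..<n} s" and s0: "\<forall>j<n. s j \<ge> 0"
    and kn: "k \<le> n" and k1: "1 \<le> k" and pos: "s (k - 1) > 0"
    and oq: "orthonormal n k q" and oy: "orthonormal n k y"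
    and eq: "(\<Sum>i<k. cinner (y i) (P *\<^sub>v q i)) = of_real (\<Sum>j<k. s j)"
  shows "\<forall>i<k. y i = q i"
proof (intro allI impI)
  fix i assume i: "i < k"
  have Pc: "P \<in> carrier_mat n n" using P unfolding psd_mat_def by blast
  note oe = orthonormal_eigenvectorsD(1)[OF ev] and ec = orthonormal_eigenvectorsD(2)[OF ev]
  have qi: "q i \<in> carrier_vec n" and yi: "y i \<in> carrier_vec n" using oq oy i by (auto simp: orthonormal_carrier)
  define d where "d = y i - q i"
  have dc: "d \<in> carrier_vec n" unfolding d_def using yi qi by simp
  note top = top_sum_attained_pair[OF P ev s s0 kn k1 oq oy eq]
  have "Re (cinner d (P *\<^sub>v d)) = 0" using top(2) i unfolding d_def by blast
  hence "(\<Sum>j<n. s j * (cmod (cinner (e j) d))\<^sup>2) = 0"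
    by (simp only: quadratic_form_eigenbasis[OF Pc ev dc] Re_complex_of_real)
  hence "\<forall>j\<in>{..<n}. s j = 0 \<or> cinner (e j) d = 0"
    using sum_nonneg_eq_0_iff[of "{..<n}" "\<lambda>j. s j * (cmod (cinner (e j) d))\<^sup>2"] s0 by simp
  hence ed: "cinner (e j) d = 0" if "j < n" "s j > 0" for j using that by force
  have BA: "cinner (q i) (e j) = 0" if "j < n" "s j < s (k - 1)" for j
    using top_sum_attained_eigenvectors[OF Pc ev s s0 kn k1 oq top(1)] that i by blast
  have "cinner (q i) d = (\<Sum>j<n. cinner (q i) (e j) * cinner (e j) d)" by (rule parseval[OF oe qi dc])
  also have "\<dots> = 0"
  proof (intro sum.neutral ballI)
    fix j assume "j \<in> {..<n}"
    thus "cinner (q i) (e j) * cinner (e j) d = 0"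
      using ed[of j] BA[of j] pos by (cases "s j < s (k - 1)") auto
  qed
  finally have qd: "cinner (q i) d = 0" .
  have "y i = q i + d" unfolding d_def using yi qi by (auto intro!: eq_vecI)
  hence "cinner (y i) (y i) = cinner (q i) (q i) + cinner (q i) d + (cinner d (q i) + cinner d d)"
    using qi dc by (simp add: cinner_add_left[of _ n] cinner_add_right[of _ n])
  hence "cinner d d = 0" using qd cinner_commute[OF qi dc] oq oy i by (simp add: orthonormal_cinner)
  hence "d = 0\<^sub>v n" by (rule cinner_self_eq_zero[OF dc])
  thus "y i = q i" unfolding d_def by (rule vec_eq_if_minus_eq_zero[OF yi qi])
qed

abbreviation proj_mat :: "nat \<Rightarrow> nat \<Rightarrow> (nat \<Rightarrow> complex vec) \<Rightarrow> complex mat" where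
  "proj_mat n k q \<equiv> spectral_mat n k q (\<lambda>_. 1)"

lemma mult_proj_mat: assumes "orthonormal n k q" and "x \<in> carrier_vec n"
  shows "proj_mat n k q *\<^sub>v x = lin_comb n k (\<lambda>l. cinner (q l) x) q"
  using mult_spectral_mat[of k q n x "\<lambda>_. 1"] assms by (simp add: orthonormal_carrier)

lemma proj_mat_fixes: assumes oq: "orthonormal n k q" and i: "i < k"
  shows "proj_mat n k q *\<^sub>v q i = q i"
  using orthonormal_eigenvectorsD(3)[OF spectral_mat_eigenvectors[OF oq] i] by simp

lemma proj_mat_idem: assumes oq: "orthonormal n k q" and x: "x \<in> carrier_vec n"
  shows "proj_mat n k q *\<^sub>v (proj_mat n k q *\<^sub>v x) = proj_mat n k q *\<^sub>v x"
  unfolding mult_proj_mat[OF oq x] using oq proj_mat_fixes[OF oq]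
  by (intro mult_mat_vec_lin_comb_fixed) (simp_all add: orthonormal_carrier)

lemma cinner_proj_mat: assumes oq: "orthonormal n k q" and x: "x \<in> carrier_vec n"
  shows "cinner x (proj_mat n k q *\<^sub>v x) = of_real (\<Sum>l<k. (cmod (cinner (q l) x))\<^sup>2)"
proof -
  have "cinner x (proj_mat n k q *\<^sub>v x) = (\<Sum>l<k. cinner (q l) x * cinner x (q l))"
    using mult_proj_mat[OF oq x] x oq by (simp add: cinner_lin_comb_right orthonormal_carrier)
  also have "\<dots> = (\<Sum>l<k. cnj (cinner (q l) x) * cinner (q l) x)"
    using oq x by (intro sum.cong) (auto simp: cinner_commute[OF _ x] orthonormal_carrier)
  finally show ?thesis by (simp add: cnj_mult_self of_real_sum)
qed

lemma proj_mat_invariant_basis: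
  assumes H: "hermitian n P" and ev: "orthonormal_eigenvectors n n P e s" and oq: "orthonormal n k q"
    and below: "\<forall>j<n. s j < c \<longrightarrow> (\<forall>i<k. cinner (q i) (e j) = 0)"
    and above: "\<forall>j<n. c < s j \<longrightarrow> e j = lin_comb n k (\<lambda>i. cinner (q i) (e j)) q"
    and l: "l < k"
  shows "proj_mat n k q *\<^sub>v (P *\<^sub>v q l) = P *\<^sub>v q l"
proof -
  let ?\<Pi> = "proj_mat n k q" and ?a = "\<lambda>j. of_real (s j - c) * cinner (e j) (q l)"
  have Pc: "P \<in> carrier_mat n n" using H by (rule hermitian_carrier)
  note oe = orthonormal_eigenvectorsD(1)[OF ev] and ec = orthonormal_eigenvectorsD(2)[OF ev]
  have ql: "q l \<in> carrier_vec n" using oq l by (simp add: orthonormal_carrier)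
  define r where "r = P *\<^sub>v q l - complex_of_real c \<cdot>\<^sub>v q l"
  have rc: "r \<in> carrier_vec n" unfolding r_def using Pc ql by simp
  have "cinner (e j) r = ?a j" if j: "j < n" for j
  proof -
    have "cinner (e j) (P *\<^sub>v q l) = of_real (s j) * cinner (e j) (q l)"
      by (rule cinner_eigenvector_hermitian[OF H ec[OF j] orthonormal_eigenvectorsD(3)[OF ev j] ql])
    thus ?thesis unfolding r_def using Pc ql ec[OF j]
      by (simp add: cinner_minus_right[of _ n] cinner_smult_right[of _ n] algebra_simps)
  qed
  hence rexp: "r = lin_comb n n ?a e"
    using orthonormal_basis_expansion[OF oe rc] lin_comb_cong[of n "\<lambda>j. cinner (e j) r" ?a e e n]
    by presburger
  have fixed: "?a j = 0 \<or> ?\<Pi> *\<^sub>v e j = e j" if j: "j < n" for j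
  proof (cases "c < s j")
    case True
    thus ?thesis using above j mult_proj_mat[OF oq ec[OF j]] by auto
  next
    case False
    hence "s j = c \<or> (\<forall>i<k. cinner (q i) (e j) = 0)" using below j by force
    thus ?thesis using l cinner_commute[OF ql ec[OF j]] by auto
  qed
  have "?\<Pi> *\<^sub>v r = r"
    unfolding rexp by (rule mult_mat_vec_lin_comb_fixed) (use ec fixed in auto)
  moreover have "P *\<^sub>v q l = r + complex_of_real c \<cdot>\<^sub>v q l"
    unfolding r_def using Pc ql by (auto intro!: eq_vecI)
  moreover have "?\<Pi> *\<^sub>v (complex_of_real c \<cdot>\<^sub>v q l) = complex_of_real c \<cdot>\<^sub>v q l"
    by (subst mult_mat_vec[OF spectral_mat_carrier(1) ql]) (simp add: proj_mat_fixes[OF oq l])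
  moreover have "?\<Pi> *\<^sub>v (r + complex_of_real c \<cdot>\<^sub>v q l) =
      ?\<Pi> *\<^sub>v r + ?\<Pi> *\<^sub>v (complex_of_real c \<cdot>\<^sub>v q l)"
    by (rule mult_add_distrib_mat_vec[OF spectral_mat_carrier(1) rc]) (use ql in simp)
  ultimately show ?thesis by simp
qed

lemma proj_mat_invariant:
  assumes P: "P \<in> carrier_mat n n" and oq: "orthonormal n k q"
    and inv: "\<And>l. l < k \<Longrightarrow> proj_mat n k q *\<^sub>v (P *\<^sub>v q l) = P *\<^sub>v q l"
    and z: "z \<in> carrier_vec n" and \<Pi>z: "proj_mat n k q *\<^sub>v z = z"
  shows "proj_mat n k q *\<^sub>v (P *\<^sub>v z) = P *\<^sub>v z"
proof -
  have qc: "\<forall>l<k. q l \<in> carrier_vec n" using oq by (simp add: orthonormal_carrier)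
  have "P *\<^sub>v z = P *\<^sub>v lin_comb n k (\<lambda>l. cinner (q l) z) q"
    using mult_proj_mat[OF oq z] \<Pi>z by simp
  also have "\<dots> = lin_comb n k (\<lambda>l. cinner (q l) z) (\<lambda>l. P *\<^sub>v q l)"
    by (rule mult_mat_vec_lin_comb[OF P qc])
  finally have Pz: "P *\<^sub>v z = lin_comb n k (\<lambda>l. cinner (q l) z) (\<lambda>l. P *\<^sub>v q l)" .
  show ?thesis unfolding Pz
    by (rule mult_mat_vec_lin_comb_fixed) (use P qc inv in auto)
qed

text \<open>If \<open>\<mu> i > s i\<close>, the eigenvectors \<open>f 0, \<dots>, f i\<close> would be orthogonal to
  \<open>e i, e (i + 1), \<dots>\<close>, so \<open>i + 1\<close> orthonormal vectors would lie in the span of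
  \<open>e 0, \<dots>, e (i - 1)\<close>.\<close>

lemma sorted_eigenvalues_le:
  assumes H: "hermitian n P" and ev: "orthonormal_eigenvectors n n P e s" and s: "antimono_on {..<n} s"
    and kn: "k \<le> n" and evf: "orthonormal_eigenvectors n k P f \<mu>" and \<mu>: "antimono_on {..<k} \<mu>"
    and i: "i < k"
  shows "\<mu> i \<le> s i"
proof (rule ccontr)
  assume "\<not> \<mu> i \<le> s i"
  note oe = orthonormal_eigenvectorsD(1)[OF ev] and ec = orthonormal_eigenvectorsD(2)[OF ev]
  note of = orthonormal_eigenvectorsD(1)[OF evf] and fc = orthonormal_eigenvectorsD(2)[OF evf]
  have one: "(\<Sum>j<i. (cmod (cinner (e j) (f l)))\<^sup>2) = 1" if l: "l \<le> i" for l
  proof -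
    have lk: "l < k" using l i by simp
    have "cinner (e j) (f l) = 0" if j: "i \<le> j" "j < n" for j
      using hermitian_eigenvectors_orthogonal[OF H ec[OF j(2)] fc[OF lk] orthonormal_eigenvectorsD(3)[OF ev j(2)]
          orthonormal_eigenvectorsD(3)[OF evf lk]] antimono_on_lessThanD[OF s j]
        antimono_on_lessThanD[OF \<mu> l i] \<open>\<not> \<mu> i \<le> s i\<close> by linarith
    hence "(\<Sum>j\<in>{i..<n}. (cmod (cinner (e j) (f l)))\<^sup>2) = 0" by simp
    moreover have "(\<Sum>j<n. (cmod (cinner (e j) (f l)))\<^sup>2) = 1"
      using parseval_real[OF oe fc[OF lk]] of lk by (simp add: orthonormal_cinner)
    moreover have "(\<Sum>j<n. (cmod (cinner (e j) (f l)))\<^sup>2) =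
        (\<Sum>j<i. (cmod (cinner (e j) (f l)))\<^sup>2) + (\<Sum>j\<in>{i..<n}. (cmod (cinner (e j) (f l)))\<^sup>2)"
      using i kn by (intro sum_lessThan_split) simp
    ultimately show ?thesis by simp
  qed
  have "real (Suc i) = (\<Sum>l<Suc i. \<Sum>j<i. (cmod (cinner (e j) (f l)))\<^sup>2)" using one by simp
  also have "\<dots> = (\<Sum>j<i. \<Sum>l<Suc i. (cmod (cinner (f l) (e j)))\<^sup>2)"
    using fc ec i kn by (subst sum.swap) (auto intro!: sum.cong simp: cmod_cinner_commute[of _ n])
  also have "\<dots> \<le> (\<Sum>j<i. 1)"
    using sum_cmod_cinner_sq_le_one[OF orthonormal_mono[OF of, of "Suc i"] ec] oe i kn
    by (intro sum_mono) (simp add: orthonormal_cinner)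
  finally show False by simp
qed

lemma mult_compression: assumes P: "P \<in> carrier_mat n n" and x: "x \<in> carrier_vec n"
  shows "(proj_mat n k q * P * proj_mat n k q - (1\<^sub>m n - proj_mat n k q)) *\<^sub>v x =
    proj_mat n k q *\<^sub>v (P *\<^sub>v (proj_mat n k q *\<^sub>v x)) - (x - proj_mat n k q *\<^sub>v x)"
proof -
  let ?\<Pi> = "proj_mat n k q"
  have "(?\<Pi> * P * ?\<Pi> - (1\<^sub>m n - ?\<Pi>)) *\<^sub>v x = (?\<Pi> * P * ?\<Pi>) *\<^sub>v x - (1\<^sub>m n - ?\<Pi>) *\<^sub>v x"
    by (rule minus_mult_distrib_mat_vec[OF _ _ x]) (use P in auto)
  also have "(1\<^sub>m n - ?\<Pi>) *\<^sub>v x = x - ?\<Pi> *\<^sub>v x"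
    using minus_mult_distrib_mat_vec[OF one_carrier_mat spectral_mat_carrier(1) x] x by simp
  finally show ?thesis using mult_mat_vec_assoc3[OF spectral_mat_carrier(1) P spectral_mat_carrier(1) x]
    by simp
qed

lemma compression_eigenvector_proj:
  assumes P: "P \<in> carrier_mat n n" and oq: "orthonormal n k q" and f: "f \<in> carrier_vec n"
    and Hf: "(proj_mat n k q * P * proj_mat n k q - (1\<^sub>m n - proj_mat n k q)) *\<^sub>v f =
      complex_of_real \<mu> \<cdot>\<^sub>v f"
  shows "proj_mat n k q *\<^sub>v (P *\<^sub>v (proj_mat n k q *\<^sub>v f)) = complex_of_real \<mu> \<cdot>\<^sub>v (proj_mat n k q *\<^sub>v f)"
    (is "?\<Pi> *\<^sub>v (P *\<^sub>v ?g) = _")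
    and "\<mu> \<noteq> -1 \<Longrightarrow> proj_mat n k q *\<^sub>v f = f"
proof -
  have \<Pi>c: "?\<Pi> \<in> carrier_mat n n" by simp
  have gc: "?g \<in> carrier_vec n" using f by simp
  have \<Pi>g: "?\<Pi> *\<^sub>v ?g = ?g" by (rule proj_mat_idem[OF oq f])
  have Pgc: "P *\<^sub>v ?g \<in> carrier_vec n" and \<Pi>Pgc: "?\<Pi> *\<^sub>v (P *\<^sub>v ?g) \<in> carrier_vec n"
    using P gc by auto
  have Hf': "?\<Pi> *\<^sub>v (P *\<^sub>v ?g) - (f - ?g) = complex_of_real \<mu> \<cdot>\<^sub>v f"
    using Hf mult_compression[OF P f] by simp
  have "?\<Pi> *\<^sub>v (?\<Pi> *\<^sub>v (P *\<^sub>v ?g) - (f - ?g)) = ?\<Pi> *\<^sub>v (?\<Pi> *\<^sub>v (P *\<^sub>v ?g)) - ?\<Pi> *\<^sub>v (f - ?g)"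
    by (rule mult_minus_distrib_mat_vec[OF \<Pi>c \<Pi>Pgc]) (use f gc in simp)
  also have "?\<Pi> *\<^sub>v (?\<Pi> *\<^sub>v (P *\<^sub>v ?g)) = ?\<Pi> *\<^sub>v (P *\<^sub>v ?g)" by (rule proj_mat_idem[OF oq Pgc])
  also have "?\<Pi> *\<^sub>v (f - ?g) = ?\<Pi> *\<^sub>v f - ?\<Pi> *\<^sub>v ?g" by (rule mult_minus_distrib_mat_vec[OF \<Pi>c f gc])
  also have "?\<Pi> *\<^sub>v f - ?\<Pi> *\<^sub>v ?g = 0\<^sub>v n" unfolding \<Pi>g using gc by simp
  finally have "?\<Pi> *\<^sub>v (?\<Pi> *\<^sub>v (P *\<^sub>v ?g) - (f - ?g)) = ?\<Pi> *\<^sub>v (P *\<^sub>v ?g)" using \<Pi>Pgc by simp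
  moreover have "?\<Pi> *\<^sub>v (complex_of_real \<mu> \<cdot>\<^sub>v f) = complex_of_real \<mu> \<cdot>\<^sub>v ?g" by (rule mult_mat_vec[OF \<Pi>c f])
  ultimately show star: "?\<Pi> *\<^sub>v (P *\<^sub>v ?g) = complex_of_real \<mu> \<cdot>\<^sub>v ?g" using Hf' by simp
  assume "\<mu> \<noteq> -1"
  have "complex_of_real \<mu> + 1 \<noteq> 0"
  proof
    assume "complex_of_real \<mu> + 1 = 0"
    hence "complex_of_real \<mu> = complex_of_real (-1)" by (simp add: eq_neg_iff_add_eq_0)
    thus False using \<open>\<mu> \<noteq> -1\<close> by (simp only: of_real_eq_iff)
  qed
  moreover have "(complex_of_real \<mu> + 1) * (?g $ a - f $ a) = 0" if a: "a < n" for a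
  proof -
    have "(?\<Pi> *\<^sub>v (P *\<^sub>v ?g)) $ a - (f $ a - ?g $ a) = complex_of_real \<mu> * f $ a"
      using arg_cong[OF Hf', of "\<lambda>v. v $ a"] a f gc \<Pi>Pgc by simp
    thus ?thesis using star a gc by (simp add: algebra_simps)
  qed
  ultimately show "?\<Pi> *\<^sub>v f = f" using gc f by (auto intro!: eq_vecI)
qed

text \<open>The compression \<open>\<Pi> P \<Pi> - (1 - \<Pi>)\<close> has the eigenvalue \<open>-1\<close> exactly on the
  orthogonal complement of the range of \<open>\<Pi>\<close>; when that range is \<open>P\<close>-invariant, its other
  eigenvectors lie in the range and are eigenvectors of \<open>P\<close>.\<close>

lemma compression_eigenvector:
  assumes P: "psd_mat n P" and oq: "orthonormal n k q"
    and inv: "\<And>z. z \<in> carrier_vec n \<Longrightarrow> proj_mat n k q *\<^sub>v z = z \<Longrightarrow>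
      proj_mat n k q *\<^sub>v (P *\<^sub>v z) = P *\<^sub>v z"
    and f: "f \<in> carrier_vec n" and ff: "cinner f f = 1"
    and Hf: "(proj_mat n k q * P * proj_mat n k q - (1\<^sub>m n - proj_mat n k q)) *\<^sub>v f =
      complex_of_real \<mu> \<cdot>\<^sub>v f"
  shows "(\<mu> \<noteq> -1 \<longrightarrow> proj_mat n k q *\<^sub>v f = f \<and> P *\<^sub>v f = complex_of_real \<mu> \<cdot>\<^sub>v f \<and> \<mu> \<ge> 0) \<and>
    (\<mu> = -1 \<longrightarrow> proj_mat n k q *\<^sub>v f = 0\<^sub>v n)"
proof (intro conjI impI)
  let ?\<Pi> = "proj_mat n k q"
  have Pc: "P \<in> carrier_mat n n" and Pnn: "\<And>x. x \<in> carrier_vec n \<Longrightarrow> Re (cinner x (P *\<^sub>v x)) \<ge> 0"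
    using P unfolding psd_mat_def by auto
  note star = compression_eigenvector_proj(1)[OF Pc oq f Hf]
  {
    assume "\<mu> \<noteq> -1"
    thus \<Pi>f: "?\<Pi> *\<^sub>v f = f" by (rule compression_eigenvector_proj(2)[OF Pc oq f Hf])
    show Pf: "P *\<^sub>v f = complex_of_real \<mu> \<cdot>\<^sub>v f" using inv[OF f \<Pi>f] star \<Pi>f by simp
    have "cinner f (P *\<^sub>v f) = of_real \<mu>" using Pf f ff by (simp add: cinner_smult_right[of _ n])
    thus "\<mu> \<ge> 0" using Pnn[OF f] by simp
  }
  assume "\<mu> = -1"
  define g where "g = ?\<Pi> *\<^sub>v f"
  have gc: "g \<in> carrier_vec n" unfolding g_def using f by simp
  have "cinner g (P *\<^sub>v g) = cinner g (?\<Pi> *\<^sub>v (P *\<^sub>v g))"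
    using hermitian_cinner[OF spectral_mat_hermitian gc] Pc gc proj_mat_idem[OF oq f]
    unfolding g_def by simp
  also have "\<dots> = - cinner g g" using star \<open>\<mu> = -1\<close> gc unfolding g_def by (simp add: cinner_smult_right[of _ n])
  finally have "Re (cinner g g) \<le> 0" using Pnn[OF gc] by simp
  hence "Re (cinner g g) = 0" using Re_cinner_self_nonneg[OF gc] by linarith
  hence "cinner g g = 0" using cinner_self_real[OF gc] by simp
  thus "?\<Pi> *\<^sub>v f = 0\<^sub>v n" using cinner_self_eq_zero[OF gc] unfolding g_def by simp
qed

lemma antimono_count_prefix:
  fixes \<mu> :: "nat \<Rightarrow> real"
  assumes kn: "k \<le> n" and \<mu>: "antimono_on {..<n} \<mu>"
    and vals: "\<forall>j<n. \<mu> j = -1 \<or> \<mu> j \<ge> 0"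
    and cnt: "(\<Sum>j<n. if \<mu> j = -1 then 0 else 1 :: real) = real k"
  shows "\<forall>j<k. \<mu> j \<noteq> -1" and "\<forall>j. k \<le> j \<longrightarrow> j < n \<longrightarrow> \<mu> j = -1"
proof -
  let ?t = "\<lambda>j. if \<mu> j = -1 then 0 else 1 :: real"
  show "\<forall>j<k. \<mu> j \<noteq> -1"
  proof (rule ccontr)
    assume "\<not> (\<forall>j<k. \<mu> j \<noteq> -1)"
    then obtain j0 where j0: "j0 < k" "\<mu> j0 = -1" by auto
    have "?t j = 0" if "j \<in> {j0..<n}" for j
      using antimono_on_lessThanD[OF \<mu>, of j0 j] vals that j0 by force
    hence "(\<Sum>j\<in>{j0..<n}. ?t j) = 0" by simp
    moreover have "(\<Sum>j<j0. ?t j) \<le> real j0" using sum_mono[of "{..<j0}" ?t "\<lambda>_. 1"] by simp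
    ultimately have "real k \<le> real j0" using cnt sum_lessThan_split[of j0 n ?t] j0 kn by simp
    thus False using j0 by simp
  qed
  show "\<forall>j. k \<le> j \<longrightarrow> j < n \<longrightarrow> \<mu> j = -1"
  proof (rule ccontr)
    assume "\<not> (\<forall>j. k \<le> j \<longrightarrow> j < n \<longrightarrow> \<mu> j = -1)"
    then obtain j0 where j0: "k \<le> j0" "j0 < n" "\<mu> j0 \<noteq> -1" by auto
    have "?t j = 1" if "j < Suc j0" for j
      using antimono_on_lessThanD[OF \<mu>, of j j0] vals that j0 by force
    hence "(\<Sum>j<Suc j0. ?t j) = real (Suc j0)" by simp
    moreover have "(\<Sum>j\<in>{Suc j0..<n}. ?t j) \<ge> 0" by (intro sum_nonneg) simp
    ultimately have "real k \<ge> real (Suc j0)" using cnt sum_lessThan_split[of "Suc j0" n ?t] j0 by simp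
    thus False using j0 by simp
  qed
qed

text \<open>Since \<open>\<Sum>\<^sub>j \<langle>f j, \<Pi> f j\<rangle> = k\<close>, exactly \<open>k\<close> eigenvalues of the compression differ
  from \<open>-1\<close>, and sorting puts them first.\<close>

lemma compression_eigenbasis:
  assumes P: "psd_mat n P" and oq: "orthonormal n k q" and kn: "k \<le> n"
    and inv: "\<And>z. z \<in> carrier_vec n \<Longrightarrow> proj_mat n k q *\<^sub>v z = z \<Longrightarrow>
      proj_mat n k q *\<^sub>v (P *\<^sub>v z) = P *\<^sub>v z"
  shows "\<exists>f \<mu>. orthonormal n n f \<and> orthonormal_eigenvectors n k P f \<mu> \<and> antimono_on {..<k} \<mu> \<and>
    (\<forall>i<k. proj_mat n k q *\<^sub>v f i = f i) \<and> (\<forall>j. k \<le> j \<longrightarrow> j < n \<longrightarrow> proj_mat n k q *\<^sub>v f j = 0\<^sub>v n)"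
proof -
  let ?\<Pi> = "proj_mat n k q"
  have "hermitian n (?\<Pi> * P * ?\<Pi> - (1\<^sub>m n - ?\<Pi>))"
    by (intro hermitian_minus hermitian_sandwich spectral_mat_hermitian psd_hermitian[OF P] hermitian_one)
  then obtain f \<mu> where ev: "orthonormal_eigenvectors n n (?\<Pi> * P * ?\<Pi> - (1\<^sub>m n - ?\<Pi>)) f \<mu>"
    and \<mu>: "antimono_on {..<n} \<mu>"
    using hermitian_sorted_eigenbasis_exists by blast
  note of = orthonormal_eigenvectorsD(1)[OF ev] and fc = orthonormal_eigenvectorsD(2)[OF ev]
  have cases: "(\<mu> j \<noteq> -1 \<longrightarrow> ?\<Pi> *\<^sub>v f j = f j \<and> P *\<^sub>v f j = complex_of_real (\<mu> j) \<cdot>\<^sub>v f j \<and> \<mu> j \<ge> 0) \<and>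
      (\<mu> j = -1 \<longrightarrow> ?\<Pi> *\<^sub>v f j = 0\<^sub>v n)" if j: "j < n" for j
    using compression_eigenvector[OF P oq inv fc[OF j] _ orthonormal_eigenvectorsD(3)[OF ev j]] of j
    by (simp add: orthonormal_cinner)
  have "Re (cinner (f j) (?\<Pi> *\<^sub>v f j)) = (if \<mu> j = -1 then 0 else 1)" if j: "j < n" for j
    using cases[OF j] fc[OF j] of j by (auto simp: orthonormal_cinner)
  moreover have "(\<Sum>j<n. Re (cinner (f j) (?\<Pi> *\<^sub>v f j))) = real k"
    using cinner_proj_mat[OF oq fc] sum_sum_cmod_cinner_sq[OF of oq] by simp
  ultimately have "(\<Sum>j<n. if \<mu> j = -1 then 0 else 1 :: real) = real k" by simp
  hence "\<forall>j<k. \<mu> j \<noteq> -1" "\<forall>j. k \<le> j \<longrightarrow> j < n \<longrightarrow> \<mu> j = -1"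
    using antimono_count_prefix[OF kn \<mu>] cases by blast+
  moreover have "antimono_on {..<k} \<mu>" by (rule monotone_on_subset[OF \<mu>]) (use kn in auto)
  ultimately show ?thesis using cases of kn orthonormal_mono[OF of kn]
    unfolding orthonormal_eigenvectors_def by (intro exI[of _ f] exI[of _ \<mu>]) auto
qed

text \<open>The sum is the trace of the compression of \<open>M\<close> to the common span.\<close>

lemma sum_cinner_eq_if_same_span:
  assumes oq: "orthonormal n k q" and of: "orthonormal n n f" and kn: "k \<le> n"
    and fin: "\<forall>i<k. proj_mat n k q *\<^sub>v f i = f i"
    and fout: "\<forall>j. k \<le> j \<longrightarrow> j < n \<longrightarrow> proj_mat n k q *\<^sub>v f j = 0\<^sub>v n"
    and M: "M \<in> carrier_mat n n"
  shows "(\<Sum>i<k. cinner (f i) (M *\<^sub>v f i)) = (\<Sum>l<k. cinner (q l) (M *\<^sub>v q l))"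
proof -
  have qc: "\<forall>l<k. q l \<in> carrier_vec n" using oq by (simp add: orthonormal_carrier)
  have fc: "\<And>j. j < n \<Longrightarrow> f j \<in> carrier_vec n" using of by (simp add: orthonormal_carrier)
  have fck: "\<forall>i<k. f i \<in> carrier_vec n" using fc kn by simp
  have fexp: "f i = lin_comb n k (\<lambda>l. cinner (q l) (f i)) q" if i: "i < k" for i
    using fin mult_proj_mat[OF oq fck[rule_format, OF i]] i by simp
  have qexp: "q l = lin_comb n k (\<lambda>i. cinner (f i) (q l)) f" if l: "l < k" for l
  proof (rule orthonormal_basis_expansion_prefix[OF of kn])
    show ql: "q l \<in> carrier_vec n" using qc l by simp
    have "cinner (q l) (f j) = 0" if j: "k \<le> j" "j < n" for j
    proof -
      have "cinner (q l) (f j) = cinner (q l) (proj_mat n k q *\<^sub>v f j)"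
        using mult_proj_mat[OF oq fc[OF j(2)]] cinner_orthonormal_lin_comb[OF oq l] by simp
      also have "\<dots> = 0" using fout j ql by simp
      finally show ?thesis .
    qed
    thus "\<forall>j. k \<le> j \<longrightarrow> j < n \<longrightarrow> cinner (f j) (q l) = 0"
      using cinner_commute[OF ql fc] by auto
  qed
  have "(\<Sum>i<k. cinner (f i) (M *\<^sub>v f i)) = (\<Sum>i<k. \<Sum>l<k. cinner (q l) (f i) * cinner (f i) (M *\<^sub>v q l))"
  proof (rule sum.cong)
    fix i assume "i \<in> {..<k}"
    hence i: "i < k" by simp
    have "M *\<^sub>v f i = lin_comb n k (\<lambda>l. cinner (q l) (f i)) (\<lambda>l. M *\<^sub>v q l)"
      using mult_mat_vec_lin_comb[OF M qc] fexp[OF i] by metis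
    thus "cinner (f i) (M *\<^sub>v f i) = (\<Sum>l<k. cinner (q l) (f i) * cinner (f i) (M *\<^sub>v q l))"
      using fck i M qc by (simp add: cinner_lin_comb_right)
  qed simp
  also have "\<dots> = (\<Sum>l<k. \<Sum>i<k. cnj (cinner (f i) (q l)) * cinner (f i) (M *\<^sub>v q l))"
    using fck qc by (subst sum.swap) (auto intro!: sum.cong simp: cinner_commute[of "q _" n])
  also have "\<dots> = (\<Sum>l<k. cinner (q l) (M *\<^sub>v q l))"
  proof (rule sum.cong)
    fix l assume "l \<in> {..<k}"
    hence l: "l < k" by simp
    have "M *\<^sub>v q l \<in> carrier_vec n" using M qc l by simp
    thus "(\<Sum>i<k. cnj (cinner (f i) (q l)) * cinner (f i) (M *\<^sub>v q l)) = cinner (q l) (M *\<^sub>v q l)"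
      using cinner_lin_comb_left[OF _ fck] qexp[OF l] by metis
  qed simp
  finally show ?thesis .
qed

lemma top_sum_attained_eigenbasis:
  assumes P: "psd_mat n P" and ev: "orthonormal_eigenvectors n n P e s"
    and s: "antimono_on {..<n} s" and s0: "\<forall>j<n. s j \<ge> 0"
    and kn: "k \<le> n" and k1: "1 \<le> k" and oq: "orthonormal n k q"
    and qeq: "(\<Sum>i<k. cinner (q i) (P *\<^sub>v q i)) = of_real (\<Sum>j<k. s j)"
  shows "\<exists>f. orthonormal_eigenvectors n k P f s \<and>
    (\<forall>M\<in>carrier_mat n n. (\<Sum>i<k. cinner (f i) (M *\<^sub>v f i)) = (\<Sum>l<k. cinner (q l) (M *\<^sub>v q l)))"
proof -
  have H: "hermitian n P" using P by (rule psd_hermitian)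
  have Pc: "P \<in> carrier_mat n n" using H by (rule hermitian_carrier)
  note split = top_sum_attained_eigenvectors[OF Pc ev s s0 kn k1 oq qeq]
  have inv: "proj_mat n k q *\<^sub>v (P *\<^sub>v z) = P *\<^sub>v z"
    if "z \<in> carrier_vec n" "proj_mat n k q *\<^sub>v z = z" for z
    by (rule proj_mat_invariant[OF Pc oq proj_mat_invariant_basis[OF H ev oq] that]) (use split in auto)
  obtain f \<mu> where of: "orthonormal n n f" and evf: "orthonormal_eigenvectors n k P f \<mu>"
    and \<mu>: "antimono_on {..<k} \<mu>" and fin: "\<forall>i<k. proj_mat n k q *\<^sub>v f i = f i"
    and fout: "\<forall>j. k \<le> j \<longrightarrow> j < n \<longrightarrow> proj_mat n k q *\<^sub>v f j = 0\<^sub>v n"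
    using compression_eigenbasis[OF P oq kn inv] by blast
  have TR: "\<forall>M\<in>carrier_mat n n. (\<Sum>i<k. cinner (f i) (M *\<^sub>v f i)) = (\<Sum>l<k. cinner (q l) (M *\<^sub>v q l))"
    using sum_cinner_eq_if_same_span[OF oq of kn fin fout] by blast
  have "complex_of_real (\<Sum>i<k. \<mu> i) = (\<Sum>i<k. cinner (f i) (P *\<^sub>v f i))"
    using orthonormal_eigenvectorsD[OF evf]
    by (auto simp: of_real_sum cinner_smult_right[of _ n] orthonormal_cinner intro!: sum.cong)
  also have "\<dots> = of_real (\<Sum>j<k. s j)" using TR Pc qeq by simp
  finally have "(\<Sum>i<k. s i - \<mu> i) = 0" by (simp only: of_real_eq_iff sum_subtractf)
  moreover have "\<mu> i \<le> s i" if "i < k" for i by (rule sorted_eigenvalues_le[OF H ev s kn evf \<mu> that])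
  ultimately have "\<forall>i<k. \<mu> i = s i" using sum_nonneg_eq_0_iff[of "{..<k}" "\<lambda>i. s i - \<mu> i"] by simp
  hence "orthonormal_eigenvectors n k P f s" using evf unfolding orthonormal_eigenvectors_def by simp
  thus ?thesis using TR by blast
qed

section \<open>Norm-parallelism\<close>

lemma exists_unimodular_rotation: "\<exists>c. cmod c = 1 \<and> c * z = complex_of_real (cmod z)"
proof (cases "z = 0")
  case False
  have "z * cnj z = complex_of_real (cmod z) * complex_of_real (cmod z)"
    by (metis complex_norm_square of_real_mult power2_eq_square)
  hence "cnj z / complex_of_real (cmod z) * z = complex_of_real (cmod z)"
    using False by (simp add: field_simps)
  thus ?thesis using False by (intro exI[of _ "cnj z / complex_of_real (cmod z)"]) (simp add: norm_divide)
next
  case True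
  thus ?thesis by (intro exI[of _ 1]) simp
qed

lemma mult_vec_polar: assumes AU: "A = U * mat_abs A" and A: "A \<in> carrier_mat n n"
  and U: "U \<in> carrier_mat n n" and x: "x \<in> carrier_vec n"
  shows "A *\<^sub>v x = U *\<^sub>v (mat_abs A *\<^sub>v x)"
proof -
  have "A *\<^sub>v x = (U * mat_abs A) *\<^sub>v x" using AU by (rule arg_cong)
  thus ?thesis using assoc_mult_mat_vec[OF U mat_abs_carrier[OF A] x] by simp
qed

text \<open>Families attaining \<open>\<parallel>A + c B\<parallel>\<^sub>(\<^sub>k\<^sub>)\<close> attain \<open>\<parallel>A\<parallel>\<^sub>(\<^sub>k\<^sub>)\<close> and \<open>\<parallel>B\<parallel>\<^sub>(\<^sub>k\<^sub>)\<close> simultaneously;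
  through \<open>A = U |A|\<close> and \<open>s k > 0\<close> they coincide after applying \<open>U\<^sup>*\<close>.\<close>

lemma parallel_attaining_family:
  assumes A: "A \<in> carrier_mat n n" and B: "B \<in> carrier_mat n n" and kn: "k \<le> n" and k1: "1 \<le> k"
    and U: "unitary_mat n U" and AU: "A = U * mat_abs A"
    and ev: "orthonormal_eigenvectors n n (mat_abs A) e s" and s: "antimono_on {..<n} s"
    and s0: "\<forall>j<n. s j \<ge> 0" and pos: "s (k - 1) > 0"
    and c: "cmod c = 1" and par: "ky_fan_norm k (A + c \<cdot>\<^sub>m B) = ky_fan_norm k A + ky_fan_norm k B"
  shows "\<exists>q. orthonormal n k q \<and> (\<Sum>i<k. cinner (q i) (mat_abs A *\<^sub>v q i)) = of_real (\<Sum>j<k. s j) \<and>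
     cmod (\<Sum>i<k. cinner (q i) ((adj U * B) *\<^sub>v q i)) = ky_fan_norm k B"
proof -
  have Uc: "U \<in> carrier_mat n n" using U unfolding unitary_mat_def by blast
  have Pc: "mat_abs A \<in> carrier_mat n n" using A by (rule mat_abs_carrier)
  obtain q w where oq: "orthonormal n k q" and ow: "orthonormal n k w"
    and att: "(\<Sum>i<k. cinner (w i) ((A + c \<cdot>\<^sub>m B) *\<^sub>v q i)) = complex_of_real (ky_fan_norm k (A + c \<cdot>\<^sub>m B))"
    using ky_fan_norm_attained[of "A + c \<cdot>\<^sub>m B" n k] A B kn by auto
  have qc: "\<And>i. i < k \<Longrightarrow> q i \<in> carrier_vec n" and wc: "\<And>i. i < k \<Longrightarrow> w i \<in> carrier_vec n"
    using oq ow by (auto simp: orthonormal_carrier)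
  let ?a = "\<Sum>i<k. cinner (w i) (A *\<^sub>v q i)" and ?b = "\<Sum>i<k. cinner (w i) (B *\<^sub>v q i)"
  have "?a + c * ?b = complex_of_real (ky_fan_norm k A + ky_fan_norm k B)"
    using att par sum_cinner_add_smult[OF A B oq ow] by simp
  moreover have "cmod ?a \<le> ky_fan_norm k A" by (rule cmod_sum_cinner_le_ky_fan_norm[OF A kn k1 oq ow])
  moreover have "cmod (c * ?b) \<le> ky_fan_norm k B"
    using cmod_sum_cinner_le_ky_fan_norm[OF B kn k1 oq ow] c by (simp add: norm_mult)
  ultimately have aeq: "?a = complex_of_real (ky_fan_norm k A)" and beq: "c * ?b = complex_of_real (ky_fan_norm k B)"
    using complex_add_eq_of_real_bounds by blast+
  define y where "y = (\<lambda>i. adj U *\<^sub>v w i)"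
  have oy: "orthonormal n k y" unfolding y_def by (rule unitary_orthonormal[OF unitary_adjoint[OF U] ow])
  have "cinner (y i) (mat_abs A *\<^sub>v q i) = cinner (w i) (A *\<^sub>v q i)" if i: "i < k" for i
    using cinner_mult_right_adjoint[OF Uc wc[OF i], of "mat_abs A *\<^sub>v q i"] Pc qc[OF i]
      mult_vec_polar[OF AU A Uc qc[OF i]] unfolding y_def by simp
  hence "(\<Sum>i<k. cinner (y i) (mat_abs A *\<^sub>v q i)) = of_real (\<Sum>j<k. s j)"
    using aeq ky_fan_norm_eigenbasis[OF A ev s kn] by simp
  note yq = eq_if_sum_cinner_top_sum[OF mat_abs_psd[OF A] ev s s0 kn k1 pos oq oy this]
    and qPq = top_sum_attained_pair(1)[OF mat_abs_psd[OF A] ev s s0 kn k1 oq oy this]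
  have "cinner (q i) ((adj U * B) *\<^sub>v q i) = cinner (w i) (B *\<^sub>v q i)" if i: "i < k" for i
    using unitary_cinner[OF unitary_adjoint[OF U] wc[OF i], of "B *\<^sub>v q i"] yq i B qc[OF i]
      mat_adjoint_carrier[OF Uc] unfolding y_def by (simp add: assoc_mult_mat_vec[of _ n n _ n])
  hence "cmod (\<Sum>i<k. cinner (q i) ((adj U * B) *\<^sub>v q i)) = cmod (c * ?b)" using c by (simp add: norm_mult)
  thus ?thesis using oq qPq beq ky_fan_norm_nonneg[OF B kn] by auto
qed

lemma parallel_imp_eigenvectors:
  assumes A: "A \<in> carrier_mat n n" and B: "B \<in> carrier_mat n n" and kn: "k \<le> n" and k1: "1 \<le> k"
    and U: "unitary_mat n U" and AU: "A = U * mat_abs A" and pos: "sing_val A k > 0"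
    and c: "cmod c = 1" and par: "ky_fan_norm k (A + c \<cdot>\<^sub>m B) = ky_fan_norm k A + ky_fan_norm k B"
  shows "\<exists>f. orthonormal_eigenvectors n k (mat_abs A) f (\<lambda>i. sing_val A (Suc i)) \<and>
    cmod (\<Sum>i<k. cinner (f i) ((adj U * B) *\<^sub>v f i)) = ky_fan_norm k B"
proof -
  obtain e s where ev: "orthonormal_eigenvectors n n (mat_abs A) e s" and s: "antimono_on {..<n} s"
    and s0: "\<forall>j<n. s j \<ge> 0"
    using abs_eigenbasis_exists[OF A] by blast
  have sv: "sing_val A (Suc i) = s i" if "i < k" for i using sing_val_eigenbasis[OF A ev s] that kn by simp
  have "s (k - 1) > 0" using pos sv[of "k - 1"] k1 by simp
  then obtain q where oq: "orthonormal n k q"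
    and qPq: "(\<Sum>i<k. cinner (q i) (mat_abs A *\<^sub>v q i)) = of_real (\<Sum>j<k. s j)"
    and qB: "cmod (\<Sum>i<k. cinner (q i) ((adj U * B) *\<^sub>v q i)) = ky_fan_norm k B"
    using parallel_attaining_family[OF A B kn k1 U AU ev s s0 _ c par] by blast
  obtain f where "orthonormal_eigenvectors n k (mat_abs A) f s"
    and "\<forall>M\<in>carrier_mat n n. (\<Sum>i<k. cinner (f i) (M *\<^sub>v f i)) = (\<Sum>l<k. cinner (q l) (M *\<^sub>v q l))"
    using top_sum_attained_eigenbasis[OF mat_abs_psd[OF A] ev s s0 kn k1 oq qPq] by blast
  moreover have "adj U * B \<in> carrier_mat n n"
    using mat_adjoint_carrier[of U n n] U B unfolding unitary_mat_def by simp
  ultimately show ?thesis using qB sv unfolding orthonormal_eigenvectors_def by auto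
qed

lemma eigenvectors_imp_parallel:
  assumes A: "A \<in> carrier_mat n n" and B: "B \<in> carrier_mat n n" and kn: "k \<le> n" and k1: "1 \<le> k"
    and U: "unitary_mat n U" and AU: "A = U * mat_abs A"
    and ev: "orthonormal_eigenvectors n k (mat_abs A) x (\<lambda>i. sing_val A (Suc i))"
    and xB: "cmod (\<Sum>i<k. cinner (x i) ((adj U * B) *\<^sub>v x i)) = ky_fan_norm k B"
  shows "\<exists>c. cmod c = 1 \<and> ky_fan_norm k (A + c \<cdot>\<^sub>m B) = ky_fan_norm k A + ky_fan_norm k B"
proof -
  have Uc: "U \<in> carrier_mat n n" using U unfolding unitary_mat_def by blast
  have Pc: "mat_abs A \<in> carrier_mat n n" using A by (rule mat_abs_carrier)
  note ox = orthonormal_eigenvectorsD(1)[OF ev] and xc = orthonormal_eigenvectorsD(2)[OF ev]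
  define y where "y = (\<lambda>i. U *\<^sub>v x i)"
  have oy: "orthonormal n k y" unfolding y_def by (rule unitary_orthonormal[OF U ox])
  define S where "S = (\<Sum>i<k. cinner (x i) ((adj U * B) *\<^sub>v x i))"
  obtain c where c: "cmod c = 1" and cS: "c * S = complex_of_real (cmod S)"
    using exists_unimodular_rotation by blast
  have "cinner (y i) (A *\<^sub>v x i) = of_real (sing_val A (Suc i))" if i: "i < k" for i
    using unitary_cinner[OF U xc[OF i], of "mat_abs A *\<^sub>v x i"] mult_vec_polar[OF AU A Uc xc[OF i]]
      Pc xc[OF i] orthonormal_eigenvectorsD(3)[OF ev i] ox i unfolding y_def
    by (simp add: cinner_smult_right[of _ n] orthonormal_cinner)
  hence "(\<Sum>i<k. cinner (y i) (A *\<^sub>v x i)) = of_real (ky_fan_norm k A)"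
    by (simp add: ky_fan_norm_eq_sum_sing_val of_real_sum)
  moreover have "(\<Sum>i<k. cinner (y i) (B *\<^sub>v x i)) = S"
    unfolding S_def y_def using B Uc xc
    by (intro sum.cong) (simp_all add: cinner_adjoint_mult_right[symmetric] assoc_mult_mat_vec[of _ n n _ n]
        mat_adjoint_carrier)
  ultimately have T: "(\<Sum>i<k. cinner (y i) ((A + c \<cdot>\<^sub>m B) *\<^sub>v x i)) =
      complex_of_real (ky_fan_norm k A + ky_fan_norm k B)"
    using sum_cinner_add_smult[OF A B ox oy, of c] cS xB unfolding S_def by simp
  have "cmod (\<Sum>i<k. cinner (y i) ((A + c \<cdot>\<^sub>m B) *\<^sub>v x i)) = ky_fan_norm k A + ky_fan_norm k B"
    unfolding T norm_of_real using ky_fan_norm_nonneg[OF A kn] ky_fan_norm_nonneg[OF B kn] by simp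
  moreover have "cmod (\<Sum>i<k. cinner (y i) ((A + c \<cdot>\<^sub>m B) *\<^sub>v x i)) \<le> ky_fan_norm k (A + c \<cdot>\<^sub>m B)"
    by (rule cmod_sum_cinner_le_ky_fan_norm[OF _ kn k1 ox oy]) (use A B in simp)
  ultimately have "ky_fan_norm k A + ky_fan_norm k B \<le> ky_fan_norm k (A + c \<cdot>\<^sub>m B)" by simp
  thus ?thesis using ky_fan_norm_add_smult_le[OF A B kn k1 c] c by (intro exI[of _ c]) simp
qed

lemma orthonormal_eigenvectors_Suc_iff:
  "orthonormal_eigenvectors n k H (\<lambda>i. u (Suc i)) (\<lambda>i. s (Suc i)) \<longleftrightarrow>
    (\<forall>i\<in>{1..k}. u i \<in> carrier_vec n) \<and>
    (\<forall>i\<in>{1..k}. \<forall>j\<in>{1..k}. cinner (u i) (u j) = (if i = j then 1 else 0)) \<and>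
    (\<forall>i\<in>{1..k}. H *\<^sub>v u i = complex_of_real (s i) \<cdot>\<^sub>v u i)"
  (is "?L \<longleftrightarrow> ?R")
proof
  assume ?L
  hence o: "orthonormal n k (\<lambda>i. u (Suc i))"
    and e: "\<And>i. i < k \<Longrightarrow> H *\<^sub>v u (Suc i) = complex_of_real (s (Suc i)) \<cdot>\<^sub>v u (Suc i)"
    unfolding orthonormal_eigenvectors_def by auto
  have pred: "i - 1 < k" "Suc (i - 1) = i" if "i \<in> {1..k}" for i using that by auto
  have "u i \<in> carrier_vec n" if "i \<in> {1..k}" for i
    using orthonormal_carrier[OF o pred(1)[OF that]] pred(2)[OF that] by simp
  moreover have "cinner (u i) (u j) = (if i = j then 1 else 0)" if "i \<in> {1..k}" "j \<in> {1..k}" for i j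
    using orthonormal_cinner[OF o pred(1)[OF that(1)] pred(1)[OF that(2)]] pred(2)[OF that(1)]
      pred(2)[OF that(2)] by (metis diff_Suc_1)
  moreover have "H *\<^sub>v u i = complex_of_real (s i) \<cdot>\<^sub>v u i" if "i \<in> {1..k}" for i
    using e[OF pred(1)[OF that]] pred(2)[OF that] by simp
  ultimately show ?R by blast
next
  assume ?R thus ?L unfolding orthonormal_eigenvectors_def orthonormal_def by auto
qed

theorem mainTheorem11:
  fixes A B U :: "complex mat" and n k :: nat
  assumes "A \<in> carrier_mat n n" and "B \<in> carrier_mat n n"
    and "1 \<le> k" and "k \<le> n"
    and "unitary_mat n U" and "A = U * mat_abs A"
    and "sing_val A k > 0"
  shows "(\<exists>c::complex. cmod c = 1 \<and>
            ky_fan_norm k (A + c \<cdot>\<^sub>m B) = ky_fan_norm k A + ky_fan_norm k B)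
    \<longleftrightarrow> (\<exists>u :: nat \<Rightarrow> complex vec.
            (\<forall>i \<in> {1..k}. u i \<in> carrier_vec n) \<and>
            (\<forall>i \<in> {1..k}. \<forall>j \<in> {1..k}. cinner (u i) (u j) = (if i = j then 1 else 0)) \<and>
            (\<forall>i \<in> {1..k}. mat_abs A *\<^sub>v u i = complex_of_real (sing_val A i) \<cdot>\<^sub>v u i) \<and>
            cmod (\<Sum>i = 1..k. cinner (u i) ((adj U * B) *\<^sub>v u i)) = ky_fan_norm k B)"
proof -
  let ?E = "\<lambda>f. orthonormal_eigenvectors n k (mat_abs A) f (\<lambda>i. sing_val A (Suc i)) \<and>
    cmod (\<Sum>i<k. cinner (f i) ((adj U * B) *\<^sub>v f i)) = ky_fan_norm k B"
  have "(\<exists>c::complex. cmod c = 1 \<and> ky_fan_norm k (A + c \<cdot>\<^sub>m B) = ky_fan_norm k A + ky_fan_norm k B)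
      \<longleftrightarrow> (\<exists>f. ?E f)"
    using parallel_imp_eigenvectors[OF assms(1,2,4,3,5-7)] eigenvectors_imp_parallel[OF assms(1,2,4,3,5,6)]
    by blast
  also have "\<dots> \<longleftrightarrow> (\<exists>u. ?E (\<lambda>i. u (Suc i)))"
  proof
    assume "\<exists>f. ?E f"
    then obtain f where "?E f" ..
    hence "?E (\<lambda>i. (\<lambda>j. f (j - 1)) (Suc i))" by simp
    thus "\<exists>u. ?E (\<lambda>i. u (Suc i))" by (rule exI[of _ "\<lambda>j. f (j - 1)"])
  qed blast
  finally show ?thesis by (simp add: orthonormal_eigenvectors_Suc_iff sum.atLeast1_atMost_eq)
qed

end
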